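(* Let $\phi:B_E\to B_E$ be analytic, write $\phi=\sum_{k\in\Gamma}\phi_k e_k$ with $\phi_k=\langle\phi,e_k\rangle$, and assume that $C_\phi:\mathcal B(B_E)\to \mathcal B(B_E)$ is compact. Then: (a) for all $k,l\in \Gamma$, the composition operator $C_{\phi_{k,l}}:\mathcal B\to\mathcal B$ is compact, where $\phi_{k,l}(\lambda)=\phi_k(\lambda e_l)$, $\lambda\in\mathbb D$; (b) $\displaystyle\lim_{k\in \Gamma} \sup_{z\in B_E} \frac{(1-\|z\|^2)|\mathcal R\phi_k(z)|}{1-|\phi_k(z)|^2}=0$; in particular $\lim_{k\in \Gamma} \|\phi_k\|_{\mathcal B(B_E)}=0$; (c) for every $n\in\Gamma$, $\displaystyle\lim_{|\phi_n(z)|\to 1} \frac{(1-\|z\|^2)|\mathcal R\phi_n(z)|}{1-|\phi_n(z)|^2}=0$.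
   Context: $E$ is a complex Hilbert space of arbitrary dimension with inner product $\langle\cdot,\cdot\rangle$, open unit ball $B_E$ and a fixed orthonormal basis $(e_k)_{k\in\Gamma}$; $\mathbb D$ is the open unit disc. $\lim_{k\in\Gamma}a_k=0$ means that for every $\varepsilon>0$ the set $\{k\in\Gamma:|a_k|\ge\varepsilon\}$ is finite. $\lim_{|\phi_n(z)|\to1}Q(z)=0$ means that for every $\varepsilon>0$ there is $r<1$ with $|Q(z)|<\varepsilon$ whenever $|\phi_n(z)|>r$. For analytic $g$ on $B_E$, $\mathcal Rg(x)=g'(x)(x)$. The Bloch space $\mathcal B(B_E)$ consists of analytic $f:B_E\to\mathbb C$ with $\|f\|_{\mathcal B(B_E)}=\sup_{x\in B_E}(1-\|x\|^2)\|f'(x)\|<\infty$, normed by $\|f\|_{Bloch(B_E)}=|f(0)|+\|f\|_{inv}$ where $\|f\|_{inv}=\sup_{x}\|\nabla(f\circ\varphi_x)(0)\|$ ($\nabla g(x)$ the vector representing $g'(x)$, $\varphi_a(y)=(s_aQ_a+P_a)\big(\frac{a-y}{1-\langle y,a\rangle}\big)$ the Möbius automorphism, $s_a=\sqrt{1-\|a\|^2}$, $P_a$ the orthogonal projection onto $\mathbb Ca$, $Q_a=I-P_a$). $C_\phi f=f\circ\phi$. The classical Bloch space $\mathcal B$ is the space of analytic $F:\mathbb D\to\mathbb C$ with $\|F\|_{\mathcal B}=\sup_{z\in\mathbb D}(1-|z|^2)|F'(z)|<\infty$, normed by $|F(0)|+\|F\|_{\mathcal B}$; for analytic $\psi:\mathbb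 D\to\mathbb D$, $C_\psi F=F\circ\psi$. *)

theory Defs
  imports "HOL-Analysis.Analysis" "HOL-Complex_Analysis.Complex_Analysis"
begin

text \<open>Model of the complex Hilbert space E with orthonormal basis indexed by the
type 'g: E = l2('g), vectors are square-summable functions 'g \<Rightarrow> complex,
and e k is the k-th unit vector.\<close>

type_synonym 'g vec = "'g \<Rightarrow> complex"

definition is_l2 :: "'g vec \<Rightarrow> bool" where
  "is_l2 x \<longleftrightarrow> (\<lambda>k. (cmod (x k))\<^sup>2) summable_on UNIV"

definition l2norm :: "'g vec \<Rightarrow> real" where
  "l2norm x = sqrt (\<Sum>\<^sub>\<infinity>k. (cmod (x k))\<^sup>2)"

definition l2inner :: "'g vec \<Rightarrow> 'g vec \<Rightarrow> complex" where
  "l2inner x y = (\<Sum>\<^sub>\<infinity>k. x k * cnj (y k))"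

definition vadd :: "'g vec \<Rightarrow> 'g vec \<Rightarrow> 'g vec" where
  "vadd x y = (\<lambda>k. x k + y k)"

definition vsub :: "'g vec \<Rightarrow> 'g vec \<Rightarrow> 'g vec" where
  "vsub x y = (\<lambda>k. x k - y k)"

definition smul :: "complex \<Rightarrow> 'g vec \<Rightarrow> 'g vec" where
  "smul c x = (\<lambda>k. c * x k)"

definition zerovec :: "'g vec" where
  "zerovec = (\<lambda>k. 0)"

definition basis_vec :: "'g \<Rightarrow> 'g vec" where
  "basis_vec l = (\<lambda>k. if k = l then 1 else 0)"

definition BE :: "'g vec set" where
  "BE = {x. is_l2 x \<and> l2norm x < 1}"

text \<open>Analyticity (= Frechet holomorphy) of a scalar function on B_E:
existence at each point of a bounded complex-linear derivative.\<close>
definition hol_fun :: "('g vec \<Rightarrow> complex) \<Rightarrow> bool" where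
  "hol_fun f \<longleftrightarrow> (\<forall>a\<in>BE. \<exists>L :: 'g vec \<Rightarrow> complex.
      (\<forall>x y. is_l2 x \<longrightarrow> is_l2 y \<longrightarrow> L (vadd x y) = L x + L y) \<and>
      (\<forall>c x. is_l2 x \<longrightarrow> L (smul c x) = c * L x) \<and>
      (\<exists>C. \<forall>x. is_l2 x \<longrightarrow> cmod (L x) \<le> C * l2norm x) \<and>
      (\<forall>\<epsilon>>0. \<exists>\<delta>>0. \<forall>h. is_l2 h \<and> l2norm h < \<delta> \<longrightarrow>
          cmod (f (vadd a h) - f a - L h) \<le> \<epsilon> * l2norm h))"

text \<open>Gradient: the vector representing f'(a) (Riesz), i.e. f'(a)(h) = <h, grad f a>.\<close>
definition grad :: "('g vec \<Rightarrow> complex) \<Rightarrow> 'g vec \<Rightarrow> 'g vec" where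
  "grad f a = (THE v. is_l2 v \<and>
      (\<forall>\<epsilon>>0. \<exists>\<delta>>0. \<forall>h. is_l2 h \<and> l2norm h < \<delta> \<longrightarrow>
          cmod (f (vadd a h) - f a - l2inner h v) \<le> \<epsilon> * l2norm h))"

definition radial :: "('g vec \<Rightarrow> complex) \<Rightarrow> 'g vec \<Rightarrow> complex" where
  "radial g x = l2inner x (grad g x)"

definition hol_selfmap :: "('g vec \<Rightarrow> 'g vec) \<Rightarrow> bool" where
  "hol_selfmap \<phi> \<longleftrightarrow> (\<forall>x\<in>BE. \<phi> x \<in> BE) \<and>
    (\<forall>a\<in>BE. \<exists>T :: 'g vec \<Rightarrow> 'g vec.
      (\<forall>x. is_l2 x \<longrightarrow> is_l2 (T x)) \<and>
      (\<forall>x y. is_l2 x \<longrightarrow> is_l2 y \<longrightarrow> T (vadd x y) = vadd (T x) (T y)) \<and>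
      (\<forall>c x. is_l2 x \<longrightarrow> T (smul c x) = smul c (T x)) \<and>
      (\<exists>C. \<forall>x. is_l2 x \<longrightarrow> l2norm (T x) \<le> C * l2norm x) \<and>
      (\<forall>\<epsilon>>0. \<exists>\<delta>>0. \<forall>h. is_l2 h \<and> l2norm h < \<delta> \<longrightarrow>
          l2norm (vsub (vsub (\<phi> (vadd a h)) (\<phi> a)) (T h)) \<le> \<epsilon> * l2norm h))"

definition bloch_semi :: "('g vec \<Rightarrow> complex) \<Rightarrow> ereal" where
  "bloch_semi f = (SUP x\<in>BE. ereal ((1 - (l2norm x)\<^sup>2) * l2norm (grad f x)))"

definition bloch_space :: "('g vec \<Rightarrow> complex) set" where
  "bloch_space = {f. hol_fun f \<and> bloch_semi f < \<infinity>}"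

text \<open>Moebius automorphism phi_a(y) = (s_a Q_a + P_a)((a - y)/(1 - <y,a>)).\<close>
definition projP :: "'g vec \<Rightarrow> 'g vec \<Rightarrow> 'g vec" where
  "projP a w = (if a = zerovec then zerovec
               else smul (l2inner w a / complex_of_real ((l2norm a)\<^sup>2)) a)"

definition mobius :: "'g vec \<Rightarrow> 'g vec \<Rightarrow> 'g vec" where
  "mobius a y = (let w = smul (1 / (1 - l2inner y a)) (vsub a y);
                     s = sqrt (1 - (l2norm a)\<^sup>2)
                 in vadd (smul (complex_of_real s) (vsub w (projP a w))) (projP a w))"

definition inv_norm :: "('g vec \<Rightarrow> complex) \<Rightarrow> ereal" where
  "inv_norm f = (SUP x\<in>BE. ereal (l2norm (grad (f \<circ> mobius x) zerovec)))"

definition bloch_norm :: "('g vec \<Rightarrow> complex) \<Rightarrow> ereal" where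
  "bloch_norm f = ereal (cmod (f zerovec)) + inv_norm f"

definition compact_comp_op :: "('g vec \<Rightarrow> 'g vec) \<Rightarrow> bool" where
  "compact_comp_op \<phi> \<longleftrightarrow> (\<forall>f\<in>bloch_space. f \<circ> \<phi> \<in> bloch_space) \<and>
    (\<forall>F :: nat \<Rightarrow> 'g vec \<Rightarrow> complex. (\<forall>n. F n \<in> bloch_space) \<longrightarrow>
        (\<exists>C. \<forall>n. bloch_norm (F n) \<le> ereal C) \<longrightarrow>
        (\<exists>r g. strict_mono r \<and> g \<in> bloch_space \<and>
           (\<lambda>n. bloch_norm (\<lambda>x. F (r n) (\<phi> x) - g x)) \<longlonglongrightarrow> 0))"

definition cbloch_semi :: "(complex \<Rightarrow> complex) \<Rightarrow> ereal" where
  "cbloch_semi F = (SUP z\<in>ball 0 1. ereal ((1 - (cmod z)\<^sup>2) * cmod (deriv F z)))"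

definition cbloch_space :: "(complex \<Rightarrow> complex) set" where
  "cbloch_space = {F. F holomorphic_on ball 0 1 \<and> cbloch_semi F < \<infinity>}"

definition cbloch_norm :: "(complex \<Rightarrow> complex) \<Rightarrow> ereal" where
  "cbloch_norm F = ereal (cmod (F 0)) + cbloch_semi F"

definition compact_ccomp_op :: "(complex \<Rightarrow> complex) \<Rightarrow> bool" where
  "compact_ccomp_op \<psi> \<longleftrightarrow> (\<forall>F\<in>cbloch_space. F \<circ> \<psi> \<in> cbloch_space) \<and>
    (\<forall>F :: nat \<Rightarrow> complex \<Rightarrow> complex. (\<forall>n. F n \<in> cbloch_space) \<longrightarrow>
        (\<exists>C. \<forall>n. cbloch_norm (F n) \<le> ereal C) \<longrightarrow>
        (\<exists>r G. strict_mono r \<and> G \<in> cbloch_space \<and>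
           (\<lambda>n. cbloch_norm (\<lambda>z. F (r n) (\<psi> z) - G z)) \<longlonglongrightarrow> 0))"

definition quot :: "('g vec \<Rightarrow> 'g vec) \<Rightarrow> 'g \<Rightarrow> 'g vec \<Rightarrow> real" where
  "quot \<phi> k z = (1 - (l2norm z)\<^sup>2) * cmod (radial (\<lambda>x. \<phi> x k) z)
                   / (1 - (cmod (\<phi> z k))\<^sup>2)"

end

theory Submission
  imports Defs
begin

text \<open>Test the compactness of \<open>C\<^sub>\<phi>\<close> on coordinate functions \<open>f\<^sub>j(x) = G\<^sub>j(x\<^sub>k\<^sub>j)\<close>, where
  the \<open>G\<^sub>j\<close> are Bloch functions on the disc with \<open>G\<^sub>j(0) = 0\<close> and Bloch seminorm at most 1, so
  that the \<open>f\<^sub>j\<close> are bounded in \<open>Bloch(B\<^sub>E)\<close>. If \<open>f\<^sub>j \<circ> \<phi> \<rightarrow> 0\<close> pointwise, a subsequence of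
  \<open>C\<^sub>\<phi> f\<^sub>j\<close> converges in Bloch norm, necessarily to 0, so the invariant gradients
  \<open>(1 - \<parallel>z\<parallel>\<^sup>2) \<parallel>\<nabla>(f\<^sub>j \<circ> \<phi>)(z)\<parallel>\<close> become uniformly small.
  With the peak functions \<open>G\<^sub>w(t) = (1 - |w|\<^sup>2) t / (1 - w\<^sup>* t)\<close>, \<open>w = \<phi>\<^sub>k(z)\<close>, whose derivative at
  \<open>w\<close> has modulus \<open>1 / (1 - |w|\<^sup>2)\<close>, this gradient dominates the quotient in (b) and (c) at
  \<open>z\<close>. Pointwise convergence holds for distinct coordinates \<open>k\<^sub>j\<close> because \<open>\<phi>(x)\<close> is
  square summable (part (b)), and for a fixed coordinate because \<open>|w\<^sub>j| \<rightarrow> 1\<close> (part (c)); the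
  identity as \<open>G\<^sub>j\<close> gives the Bloch seminorms in (b). Part (a) restricts everything to the slice
  \<open>\<lambda> \<mapsto> \<lambda>e\<^sub>l\<close>, on which the Bloch norm can only decrease.\<close>

section \<open>The sequence space\<close>

lemma is_l2_zerovec [simp]: "is_l2 zerovec"
  by (simp add: is_l2_def zerovec_def)

lemma is_l2_smul [simp]:
  assumes "is_l2 x"
  shows "is_l2 (smul c x)"
proof -
  have "(\<lambda>k. (cmod c)\<^sup>2 * (cmod (x k))\<^sup>2) summable_on UNIV"
    using assms by (intro summable_on_cmult_right) (simp add: is_l2_def)
  then show ?thesis
    by (simp add: is_l2_def smul_def norm_mult power_mult_distrib)
qed

lemma is_l2_vadd [simp]:
  assumes "is_l2 x" "is_l2 y"
  shows "is_l2 (vadd x y)"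
proof -
  have "(\<lambda>k. 2 * (cmod (x k))\<^sup>2 + 2 * (cmod (y k))\<^sup>2) summable_on UNIV"
    using assms by (intro summable_on_add summable_on_cmult_right) (auto simp: is_l2_def)
  moreover have "(cmod (x k + y k))\<^sup>2 \<le> 2 * (cmod (x k))\<^sup>2 + 2 * (cmod (y k))\<^sup>2" for k
  proof -
    have "(cmod (x k + y k))\<^sup>2 \<le> (cmod (x k) + cmod (y k))\<^sup>2"
      by (simp add: norm_triangle_ineq power_mono)
    also have "\<dots> \<le> 2 * (cmod (x k))\<^sup>2 + 2 * (cmod (y k))\<^sup>2"
      using sum_squares_bound[of "cmod (x k)" "cmod (y k)"] by (simp add: power2_sum)
    finally show ?thesis .
  qed
  ultimately show ?thesis
    unfolding is_l2_def vadd_def by (rule summable_on_comparison_test) auto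
qed

lemma vsub_eq_vadd_smul: "vsub x y = vadd x (smul (-1) y)"
  by (simp add: vsub_def vadd_def smul_def)

lemma is_l2_vsub [simp]: "is_l2 x \<Longrightarrow> is_l2 y \<Longrightarrow> is_l2 (vsub x y)"
  by (simp add: vsub_eq_vadd_smul)

lemma infsum_finite_support:
  "finite F \<Longrightarrow> (\<And>k. k \<notin> F \<Longrightarrow> f k = 0) \<Longrightarrow>
   (\<Sum>\<^sub>\<infinity>k. f k) = (sum f F :: 'a :: {topological_comm_monoid_add, t2_space})"
  by (rule infsumI, rule has_sum_finite_neutralI[of F]) auto

lemma is_l2_basis_vec [simp]: "is_l2 (basis_vec l)"
  unfolding is_l2_def basis_vec_def
  by (rule finite_nonzero_values_imp_summable_on) (rule finite_subset[of _ "{l}"], auto)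

lemma l2inner_summable:
  assumes "is_l2 x" "is_l2 y"
  shows "(\<lambda>k. x k * cnj (y k)) summable_on UNIV"
proof -
  have "(\<lambda>k. ((cmod (x k))\<^sup>2 + (cmod (y k))\<^sup>2) * (1/2)) summable_on UNIV"
    using assms by (intro summable_on_cmult_left summable_on_add) (auto simp: is_l2_def)
  moreover have "norm (x k * cnj (y k)) \<le> ((cmod (x k))\<^sup>2 + (cmod (y k))\<^sup>2) * (1/2)" for k
    using sum_squares_bound[of "cmod (x k)" "cmod (y k)"] by (simp add: norm_mult)
  ultimately have "(\<lambda>k. norm (x k * cnj (y k))) summable_on UNIV"
    by (rule summable_on_comparison_test) auto
  then show ?thesis
    using summable_on_iff_abs_summable_on_complex by blast
qed

lemma l2norm_nonneg [simp]: "l2norm x \<ge> 0"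
  by (simp add: l2norm_def infsum_nonneg)

lemma l2norm_power2: "(l2norm x)\<^sup>2 = (\<Sum>\<^sub>\<infinity>k. (cmod (x k))\<^sup>2)"
  by (simp add: l2norm_def infsum_nonneg)

lemma l2norm_zerovec [simp]: "l2norm zerovec = 0"
  by (simp add: l2norm_def zerovec_def)

lemma l2inner_self: "is_l2 x \<Longrightarrow> l2inner x x = complex_of_real ((l2norm x)\<^sup>2)"
proof -
  assume "is_l2 x"
  then have "((\<lambda>k. complex_of_real ((cmod (x k))\<^sup>2)) has_sum
      complex_of_real (\<Sum>\<^sub>\<infinity>k. (cmod (x k))\<^sup>2)) UNIV"
    by (intro has_sum_of_real) (simp add: is_l2_def)
  then show ?thesis
    unfolding l2inner_def complex_norm_square l2norm_power2 by (rule infsumI)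
qed

lemma norm_le_l2norm:
  assumes "is_l2 x"
  shows "cmod (x k) \<le> l2norm x"
proof -
  have "sum (\<lambda>k. (cmod (x k))\<^sup>2) {k} \<le> (\<Sum>\<^sub>\<infinity>k. (cmod (x k))\<^sup>2)"
    by (rule finite_sum_le_infsum) (use assms in \<open>auto simp: is_l2_def\<close>)
  then have "(cmod (x k))\<^sup>2 \<le> (l2norm x)\<^sup>2"
    by (simp add: l2norm_power2)
  then show ?thesis
    using l2norm_nonneg power2_le_imp_le by blast
qed

lemma l2norm_eq_0D: "is_l2 x \<Longrightarrow> l2norm x = 0 \<Longrightarrow> x = zerovec"
  using norm_le_l2norm by (fastforce simp: zerovec_def)

lemma l2inner_swap: "l2inner y x = cnj (l2inner x y)"
  unfolding l2inner_def by (simp flip: infsum_cnj) (simp add: mult.commute)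

lemma l2inner_vadd_left:
  "is_l2 x \<Longrightarrow> is_l2 y \<Longrightarrow> is_l2 z \<Longrightarrow> l2inner (vadd x y) z = l2inner x z + l2inner y z"
  unfolding l2inner_def vadd_def by (simp add: distrib_right infsum_add l2inner_summable)

lemma l2inner_smul_left: "is_l2 x \<Longrightarrow> is_l2 y \<Longrightarrow> l2inner (smul c x) y = c * l2inner x y"
  unfolding l2inner_def smul_def by (simp add: mult.assoc infsum_cmult_right l2inner_summable)

lemma l2inner_vadd_right:
  "is_l2 x \<Longrightarrow> is_l2 y \<Longrightarrow> is_l2 z \<Longrightarrow> l2inner z (vadd x y) = l2inner z x + l2inner z y"
  by (subst (1 2 3) l2inner_swap) (simp add: l2inner_vadd_left)

lemma l2inner_smul_right: "is_l2 x \<Longrightarrow> is_l2 y \<Longrightarrow> l2inner y (smul c x) = cnj c * l2inner y x"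
  by (subst (1 2) l2inner_swap) (simp add: l2inner_smul_left)

lemma l2inner_vsub_left:
  "is_l2 x \<Longrightarrow> is_l2 y \<Longrightarrow> is_l2 z \<Longrightarrow> l2inner (vsub x y) z = l2inner x z - l2inner y z"
  by (simp add: vsub_eq_vadd_smul l2inner_vadd_left l2inner_smul_left)

lemma l2inner_vsub_right:
  "is_l2 x \<Longrightarrow> is_l2 y \<Longrightarrow> is_l2 z \<Longrightarrow> l2inner z (vsub x y) = l2inner z x - l2inner z y"
  by (simp add: vsub_eq_vadd_smul l2inner_vadd_right l2inner_smul_right)

lemma l2inner_zerovec_left [simp]: "l2inner zerovec y = 0"
  by (simp add: l2inner_def zerovec_def)

lemma l2inner_zerovec_right [simp]: "l2inner y zerovec = 0"
  by (simp add: l2inner_def zerovec_def)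

lemma l2norm_smul:
  assumes "is_l2 x"
  shows "l2norm (smul c x) = cmod c * l2norm x"
proof -
  have "(\<Sum>\<^sub>\<infinity>k. (cmod (smul c x k))\<^sup>2) = (\<Sum>\<^sub>\<infinity>k. (cmod c)\<^sup>2 * (cmod (x k))\<^sup>2)"
    by (simp add: smul_def norm_mult power_mult_distrib)
  also have "\<dots> = (cmod c)\<^sup>2 * (\<Sum>\<^sub>\<infinity>k. (cmod (x k))\<^sup>2)"
    by (rule infsum_cmult_right) (use assms in \<open>simp add: is_l2_def\<close>)
  finally show ?thesis
    by (simp add: l2norm_def real_sqrt_mult)
qed

lemma l2norm_vadd_power2:
  assumes "is_l2 x" "is_l2 y"
  shows "(l2norm (vadd x y))\<^sup>2 = (l2norm x)\<^sup>2 + 2 * Re (l2inner x y) + (l2norm y)\<^sup>2"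
proof -
  have "complex_of_real ((l2norm (vadd x y))\<^sup>2) = l2inner (vadd x y) (vadd x y)"
    using assms by (simp add: l2inner_self)
  also have "\<dots> = l2inner x x + (l2inner x y + cnj (l2inner x y)) + l2inner y y"
    using assms by (simp add: l2inner_vadd_left l2inner_vadd_right l2inner_swap[of y x])
  also have "\<dots> = complex_of_real ((l2norm x)\<^sup>2 + 2 * Re (l2inner x y) + (l2norm y)\<^sup>2)"
    using assms by (simp add: l2inner_self complex_add_cnj)
  finally show ?thesis
    using of_real_eq_iff by blast
qed

lemma l2inner_cauchy_schwarz:
  assumes x: "is_l2 x" and y: "is_l2 y"
  shows "cmod (l2inner x y) \<le> l2norm x * l2norm y"
proof (cases "l2norm y = 0")
  case True
  then show ?thesis
    using y l2norm_eq_0D by fastforce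
next
  case False
  then have ny: "l2norm y > 0"
    using l2norm_nonneg[of y] by linarith
  define t where "t = l2inner x y / complex_of_real ((l2norm y)\<^sup>2)"
  have "0 \<le> (l2norm (vadd x (smul (-t) y)))\<^sup>2"
    by simp
  also have "\<dots> = (l2norm x)\<^sup>2 + 2 * Re (- cnj t * l2inner x y) + (cmod t)\<^sup>2 * (l2norm y)\<^sup>2"
    using x y by (simp add: l2norm_vadd_power2 l2norm_smul power_mult_distrib l2inner_smul_right)
  also have "- cnj t * l2inner x y = - complex_of_real ((cmod (l2inner x y))\<^sup>2 / (l2norm y)\<^sup>2)"
    unfolding t_def using complex_norm_square[of "l2inner x y"]
    by (simp add: mult.commute del: of_real_power)
  also have "(cmod t)\<^sup>2 = (cmod (l2inner x y))\<^sup>2 / ((l2norm y)\<^sup>2)\<^sup>2"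
    unfolding t_def by (simp add: norm_divide power_divide norm_power del: of_real_power)
  finally have "(cmod (l2inner x y))\<^sup>2 \<le> (l2norm x * l2norm y)\<^sup>2"
    using ny by (simp add: power2_eq_square field_simps)
  then show ?thesis
    by (rule power2_le_imp_le) simp
qed

lemma l2norm_triangle:
  assumes "is_l2 x" "is_l2 y"
  shows "l2norm (vadd x y) \<le> l2norm x + l2norm y"
proof -
  have "Re (l2inner x y) \<le> l2norm x * l2norm y"
    using l2inner_cauchy_schwarz[OF assms] complex_Re_le_cmod order_trans by blast
  then have "(l2norm (vadd x y))\<^sup>2 \<le> (l2norm x + l2norm y)\<^sup>2"
    using assms by (simp add: l2norm_vadd_power2 power2_sum)
  then show ?thesis
    by (rule power2_le_imp_le) simp
qed

lemma l2inner_basis_vec_right [simp]: "l2inner x (basis_vec l) = x l"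
  unfolding l2inner_def basis_vec_def by (subst infsum_finite_support[of "{l}"]) auto

lemma l2inner_basis_vec_left [simp]: "l2inner (basis_vec l) x = cnj (x l)"
  unfolding l2inner_def basis_vec_def by (subst infsum_finite_support[of "{l}"]) auto

lemma l2norm_basis_vec [simp]: "l2norm (basis_vec l) = 1"
  unfolding l2norm_def basis_vec_def by (subst infsum_finite_support[of "{l}"]) auto

lemma BE_iff: "x \<in> BE \<longleftrightarrow> is_l2 x \<and> l2norm x < 1"
  by (simp add: BE_def)

lemma l2norm_power2_less_1: "x \<in> BE \<Longrightarrow> (l2norm x)\<^sup>2 < 1"
  by (simp add: BE_iff abs_square_less_1)

lemma norm_less_1_if_BE: "x \<in> BE \<Longrightarrow> cmod (x k) < 1"
  by (meson BE_iff norm_le_l2norm order_le_less_trans)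

lemma vadd_in_BE:
  assumes "a \<in> BE" "is_l2 h" "l2norm h < 1 - l2norm a"
  shows "vadd a h \<in> BE"
  using assms l2norm_triangle[of a h] by (simp add: BE_iff)

lemma smul_basis_vec_in_BE: "cmod t < 1 \<Longrightarrow> smul t (basis_vec l) \<in> BE"
  by (simp add: BE_iff l2norm_smul)

lemma norm_l2inner_le_if_BE: "z \<in> BE \<Longrightarrow> is_l2 v \<Longrightarrow> cmod (l2inner z v) \<le> l2norm v"
  using l2inner_cauchy_schwarz[of z v] mult_right_le_one_le[of "l2norm v" "l2norm z"]
  by (simp add: BE_iff mult.commute)

definition vrestrict :: "'g set \<Rightarrow> 'g vec \<Rightarrow> 'g vec" where
  "vrestrict F h = (\<lambda>k. if k \<in> F then h k else 0)"

lemma is_l2_vrestrict [simp]: "finite F \<Longrightarrow> is_l2 (vrestrict F h)"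
  unfolding is_l2_def vrestrict_def
  by (rule finite_nonzero_values_imp_summable_on) (rule finite_subset[of _ F], auto)

lemma l2norm_vrestrict_power2:
  "finite F \<Longrightarrow> (l2norm (vrestrict F h))\<^sup>2 = (\<Sum>k\<in>F. (cmod (h k))\<^sup>2)"
  unfolding l2norm_power2 vrestrict_def by (subst infsum_finite_support[of F]) auto

lemma l2inner_vrestrict:
  "finite F \<Longrightarrow> l2inner (vrestrict F h) v = (\<Sum>k\<in>F. h k * cnj (v k))"
  unfolding l2inner_def vrestrict_def by (subst infsum_finite_support[of F]) auto

lemma l2_tail_small:
  assumes "is_l2 h" "\<epsilon> > 0"
  obtains F where "finite F" "l2norm (vsub h (vrestrict F h)) \<le> \<epsilon>"
proof -
  let ?f = "\<lambda>k. (cmod (h k))\<^sup>2"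
  have s: "?f summable_on UNIV"
    using assms by (simp add: is_l2_def)
  obtain F where F: "finite F" "dist (sum ?f F) (infsum ?f UNIV) \<le> \<epsilon>\<^sup>2"
    using infsum_finite_approximation[OF s, of "\<epsilon>\<^sup>2"] assms by auto
  have "infsum ?f UNIV = sum ?f F + infsum (\<lambda>k. if k \<in> F then 0 else ?f k) UNIV"
  proof -
    have "(\<lambda>k. if k \<in> F then ?f k else 0) summable_on UNIV"
      by (rule finite_nonzero_values_imp_summable_on) (rule finite_subset[of _ F], use F in auto)
    moreover have "(\<lambda>k. if k \<in> F then 0 else ?f k) summable_on UNIV"
      by (rule summable_on_comparison_test[OF s]) auto
    moreover have "infsum ?f UNIV
        = infsum (\<lambda>k. (if k \<in> F then ?f k else 0) + (if k \<in> F then 0 else ?f k)) UNIV"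
      by (intro infsum_cong) auto
    ultimately show ?thesis
      using F by (simp add: infsum_add infsum_finite_support[of F])
  qed
  moreover have "(l2norm (vsub h (vrestrict F h)))\<^sup>2 = infsum (\<lambda>k. if k \<in> F then 0 else ?f k) UNIV"
    unfolding l2norm_power2 by (intro infsum_cong) (auto simp: vsub_def vrestrict_def)
  ultimately have "(l2norm (vsub h (vrestrict F h)))\<^sup>2 \<le> \<epsilon>\<^sup>2"
    using F(2) by (simp add: dist_real_def)
  then show ?thesis
    using that F(1) assms(2) by (meson less_imp_le power2_le_imp_le)
qed

lemma l2_tendsto_zero_along_inj:
  assumes inj: "inj kk" and y: "is_l2 y"
  shows "(\<lambda>j::nat. y (kk j)) \<longlonglongrightarrow> 0"
proof (rule LIMSEQ_I)
  fix r :: real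
  assume r: "r > 0"
  obtain F where F: "finite F" "l2norm (vsub y (vrestrict F y)) \<le> r/2"
    using l2_tail_small[OF y, of "r/2"] r by auto
  obtain N where N: "kk -` F \<subseteq> {..<N}"
    using finite_vimageI[OF F(1) inj] finite_nat_iff_bounded by blast
  have "cmod (y (kk n)) < r" if "n \<ge> N" for n
  proof -
    have "cmod (y (kk n)) = cmod (vsub y (vrestrict F y) (kk n))"
      using that N by (auto simp: vsub_def vrestrict_def)
    also have "\<dots> \<le> l2norm (vsub y (vrestrict F y))"
      using y F(1) by (simp add: norm_le_l2norm)
    finally show ?thesis
      using F(2) r by simp
  qed
  then show "\<exists>N. \<forall>n\<ge>N. norm (y (kk n) - 0) < r"
    by auto
qed

lemma linear_vrestrict:
  assumes additive: "\<And>x y. is_l2 x \<Longrightarrow> is_l2 y \<Longrightarrow> L (vadd x y) = L x + L y"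
    and homogeneous: "\<And>c x. is_l2 x \<Longrightarrow> L (smul c x) = c * L x"
    and "finite F"
  shows "L (vrestrict F h) = (\<Sum>k\<in>F. h k * L (basis_vec k))"
  using \<open>finite F\<close>
proof (induction F rule: finite_induct)
  case empty
  have "vrestrict {} h = smul 0 zerovec"
    by (simp add: vrestrict_def smul_def zerovec_def)
  then show ?case
    by (simp add: homogeneous)
next
  case (insert j F)
  have "vrestrict (insert j F) h = vadd (smul (h j) (basis_vec j)) (vrestrict F h)"
    using insert by (auto simp: vrestrict_def vadd_def smul_def basis_vec_def)
  then show ?case
    using insert by (simp add: additive homogeneous)
qed

lemma is_l2_riesz_vector:
  fixes L :: "'g vec \<Rightarrow> complex"
  assumes additive: "\<And>x y. is_l2 x \<Longrightarrow> is_l2 y \<Longrightarrow> L (vadd x y) = L x + L y"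
    and homogeneous: "\<And>c x. is_l2 x \<Longrightarrow> L (smul c x) = c * L x"
    and bounded: "\<And>x. is_l2 x \<Longrightarrow> cmod (L x) \<le> C * l2norm x"
  shows "is_l2 (\<lambda>k. cnj (L (basis_vec k)))"
proof -
  define v where "v = (\<lambda>k. cnj (L (basis_vec k)))"
  have "(\<Sum>k\<in>F. (cmod (v k))\<^sup>2) \<le> C\<^sup>2" if "finite F" for F
  proof -
    define S where "S = (\<Sum>k\<in>F. (cmod (v k))\<^sup>2)"
    have S0: "S \<ge> 0"
      by (simp add: S_def sum_nonneg)
    have "L (vrestrict F v) = (\<Sum>k\<in>F. complex_of_real ((cmod (v k))\<^sup>2))"
      using linear_vrestrict[OF additive homogeneous that]
      by (simp add: v_def complex_norm_square mult.commute del: of_real_power)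
    also have "\<dots> = complex_of_real S"
      by (simp only: S_def of_real_sum)
    finally have "cmod (L (vrestrict F v)) = S"
      using S0 by simp
    moreover have "l2norm (vrestrict F v) = sqrt S"
      using l2norm_vrestrict_power2[OF that, of v] l2norm_nonneg real_sqrt_unique
      unfolding S_def by metis
    ultimately have "sqrt S * sqrt S \<le> C * sqrt S"
      using bounded[OF is_l2_vrestrict[OF that], of v] S0 by simp
    then have "sqrt S \<le> C \<or> S = 0"
      using S0 by (metis mult_right_le_imp_le real_sqrt_gt_zero less_eq_real_def)
    then show ?thesis
      using S0 unfolding S_def[symmetric]
      by (metis power2_le_imp_le real_sqrt_ge_zero real_sqrt_pow2 power_mono zero_le_power2)
  qed
  then show ?thesis
    unfolding is_l2_def v_def[symmetric]
    by (intro nonneg_bdd_above_summable_on bdd_aboveI[of _ "C\<^sup>2"]) auto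
qed

text \<open>The representing vector is \<open>v\<^sub>k = cnj (L e\<^sub>k)\<close>: both sides agree on finitely supported
  vectors and are bounded, so they differ by at most a multiple of the norm of an arbitrarily
  small tail.\<close>

lemma l2_riesz:
  fixes L :: "'g vec \<Rightarrow> complex"
  assumes additive: "\<And>x y. is_l2 x \<Longrightarrow> is_l2 y \<Longrightarrow> L (vadd x y) = L x + L y"
    and homogeneous: "\<And>c x. is_l2 x \<Longrightarrow> L (smul c x) = c * L x"
    and bounded: "\<And>x. is_l2 x \<Longrightarrow> cmod (L x) \<le> C * l2norm x"
  obtains v where "is_l2 v" "\<And>h. is_l2 h \<Longrightarrow> L h = l2inner h v"
proof -
  define v where "v = (\<lambda>k. cnj (L (basis_vec k)))"
  have lv: "is_l2 v"
    unfolding v_def using additive homogeneous bounded by (rule is_l2_riesz_vector)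
  define K where "K = \<bar>C\<bar> + l2norm v + 1"
  have K: "K > 0"
    by (simp add: K_def add_nonneg_pos)
  have "L h = l2inner h v" if lh: "is_l2 h" for h
  proof -
    have "cmod (L h - l2inner h v) \<le> 0 + e" if e: "e > 0" for e
    proof -
      have "e / K > 0"
        using e K by simp
      then obtain F where F: "finite F" "l2norm (vsub h (vrestrict F h)) \<le> e / K"
        using l2_tail_small[OF lh] by blast
      define d where "d = vsub h (vrestrict F h)"
      have ld: "is_l2 d"
        using lh F by (simp add: d_def)
      have h_split: "h = vadd d (vrestrict F h)"
        by (auto simp: d_def vadd_def vsub_def)
      have "L (vrestrict F h) = l2inner (vrestrict F h) v"
        using linear_vrestrict[OF additive homogeneous F(1)] F(1)
        by (simp add: l2inner_vrestrict v_def)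
      then have "L h - l2inner h v = L d - l2inner d v"
        using ld F lv by (subst (1 2) h_split) (simp add: additive l2inner_vadd_left)
      then have "cmod (L h - l2inner h v) = cmod (L d - l2inner d v)"
        by simp
      also have "\<dots> \<le> \<bar>C\<bar> * l2norm d + l2norm d * l2norm v"
        using bounded[OF ld] l2inner_cauchy_schwarz[OF ld lv] norm_triangle_ineq4[of "L d" "l2inner d v"]
          mult_right_mono[OF abs_ge_self[of C] l2norm_nonneg[of d]] by linarith
      also have "\<dots> \<le> K * l2norm d"
        by (simp add: K_def algebra_simps)
      also have "\<dots> \<le> e"
        using F(2) K by (simp add: d_def field_simps)
      finally show ?thesis
        by simp
    qed
    then show ?thesis
      using field_le_epsilon[of "cmod (L h - l2inner h v)" 0] by simp
  qed
  with lv that show ?thesis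
    by blast
qed

section \<open>Gradients\<close>

definition has_grad :: "('g vec \<Rightarrow> complex) \<Rightarrow> 'g vec \<Rightarrow> 'g vec \<Rightarrow> bool" where
  "has_grad f a v \<longleftrightarrow> is_l2 v \<and> (\<forall>\<epsilon>>0. \<exists>\<delta>>0. \<forall>h. is_l2 h \<and> l2norm h < \<delta> \<longrightarrow>
      cmod (f (vadd a h) - f a - l2inner h v) \<le> \<epsilon> * l2norm h)"

lemma has_grad_unique:
  assumes fv: "has_grad f a v" and fw: "has_grad f a w"
  shows "v = w"
proof -
  define u where "u = vsub v w"
  have lu: "is_l2 u"
    using fv fw by (simp add: u_def has_grad_def)
  have "l2norm u = 0"
  proof (rule ccontr)
    assume "l2norm u \<noteq> 0"
    then have nu: "l2norm u > 0"
      using l2norm_nonneg[of u] by linarith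
    define \<epsilon> where "\<epsilon> = l2norm u / 4"
    have ep: "\<epsilon> > 0"
      using nu by (simp add: \<epsilon>_def)
    obtain d1 where d1: "d1 > 0" "\<And>h. is_l2 h \<Longrightarrow> l2norm h < d1 \<Longrightarrow>
        cmod (f (vadd a h) - f a - l2inner h v) \<le> \<epsilon> * l2norm h"
      using fv ep unfolding has_grad_def by blast
    obtain d2 where d2: "d2 > 0" "\<And>h. is_l2 h \<Longrightarrow> l2norm h < d2 \<Longrightarrow>
        cmod (f (vadd a h) - f a - l2inner h w) \<le> \<epsilon> * l2norm h"
      using fw ep unfolding has_grad_def by blast
    define t :: real where "t = min d1 d2 / (2 * l2norm u)"
    have tp: "t > 0"
      using d1 d2 nu by (simp add: t_def)
    define h where "h = smul (complex_of_real t) u"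
    have lh: "is_l2 h"
      using lu by (simp add: h_def)
    have nh: "l2norm h = t * l2norm u"
      using lu tp by (simp add: h_def l2norm_smul)
    then have "l2norm h < d1" "l2norm h < d2"
      using nu d1 d2 by (simp_all add: t_def)
    have "l2inner h u = (f (vadd a h) - f a - l2inner h w) - (f (vadd a h) - f a - l2inner h v)"
      using fv fw lh by (simp add: u_def l2inner_vsub_right has_grad_def)
    then have "cmod (l2inner h u)
        \<le> cmod (f (vadd a h) - f a - l2inner h w) + cmod (f (vadd a h) - f a - l2inner h v)"
      by (metis norm_triangle_ineq4)
    also have "\<dots> \<le> 2 * \<epsilon> * l2norm h"
      using d1(2)[OF lh \<open>l2norm h < d1\<close>] d2(2)[OF lh \<open>l2norm h < d2\<close>] by simp
    finally have "cmod (l2inner h u) \<le> 2 * \<epsilon> * l2norm h" .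
    moreover have "cmod (l2inner h u) = t * (l2norm u)\<^sup>2"
      using lu tp by (simp add: h_def l2inner_smul_left l2inner_self norm_mult norm_power)
    ultimately have "t * (l2norm u)\<^sup>2 \<le> 2 * (l2norm u / 4) * (t * l2norm u)"
      by (simp add: nh \<epsilon>_def)
    then show False
      using tp nu by (simp add: power2_eq_square field_simps)
  qed
  then have "u = zerovec"
    using lu l2norm_eq_0D by blast
  then show ?thesis
    by (intro ext) (metis u_def vsub_def zerovec_def right_minus_eq)
qed

lemma grad_eqI: "has_grad f a v \<Longrightarrow> grad f a = v"
  unfolding grad_def has_grad_def[symmetric] by (rule the_equality) (auto intro: has_grad_unique)

lemma has_grad_grad:
  assumes "hol_fun f" "a \<in> BE"
  shows "has_grad f a (grad f a)"
proof -
  obtain L where L: "\<forall>x y. is_l2 x \<longrightarrow> is_l2 y \<longrightarrow> L (vadd x y) = L x + L y"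
      "\<forall>c x. is_l2 x \<longrightarrow> L (smul c x) = c * L x"
      "\<exists>C. \<forall>x. is_l2 x \<longrightarrow> cmod (L x) \<le> C * l2norm x"
      "\<forall>\<epsilon>>0. \<exists>\<delta>>0. \<forall>h. is_l2 h \<and> l2norm h < \<delta> \<longrightarrow>
          cmod (f (vadd a h) - f a - L h) \<le> \<epsilon> * l2norm h"
    using assms unfolding hol_fun_def by blast
  obtain C where "\<forall>x. is_l2 x \<longrightarrow> cmod (L x) \<le> C * l2norm x"
    using L(3) by blast
  then obtain v where "is_l2 v" "\<And>h. is_l2 h \<Longrightarrow> L h = l2inner h v"
    using l2_riesz[of L C] L(1,2) by blast
  with L(4) have "has_grad f a v"
    unfolding has_grad_def by metis
  then show ?thesis
    using grad_eqI by metis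
qed

lemma is_l2_grad: "hol_fun f \<Longrightarrow> a \<in> BE \<Longrightarrow> is_l2 (grad f a)"
  using has_grad_grad unfolding has_grad_def by blast

lemma hol_funI:
  fixes f :: "'g vec \<Rightarrow> complex"
  assumes "\<And>a. a \<in> BE \<Longrightarrow> \<exists>v. has_grad f a v"
  shows "hol_fun f"
  unfolding hol_fun_def
proof
  fix a :: "'g vec"
  assume "a \<in> BE"
  then obtain v where v: "has_grad f a v"
    using assms by blast
  then have lv: "is_l2 v"
    by (simp add: has_grad_def)
  show "\<exists>L. (\<forall>x y. is_l2 x \<longrightarrow> is_l2 y \<longrightarrow> L (vadd x y) = L x + L y) \<and>
      (\<forall>c x. is_l2 x \<longrightarrow> L (smul c x) = c * L x) \<and>
      (\<exists>C. \<forall>x. is_l2 x \<longrightarrow> cmod (L x) \<le> C * l2norm x) \<and>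
      (\<forall>\<epsilon>>0. \<exists>\<delta>>0. \<forall>h. is_l2 h \<and> l2norm h < \<delta> \<longrightarrow>
          cmod (f (vadd a h) - f a - L h) \<le> \<epsilon> * l2norm h)"
  proof (intro exI[of _ "\<lambda>h. l2inner h v"] conjI)
    show "\<exists>C. \<forall>x. is_l2 x \<longrightarrow> cmod (l2inner x v) \<le> C * l2norm x"
      using l2inner_cauchy_schwarz[OF _ lv] by (metis mult.commute)
  qed (use v lv in \<open>auto simp: l2inner_vadd_left l2inner_smul_left has_grad_def\<close>)
qed

lemma has_grad_diff:
  assumes fv: "has_grad f a v" and gw: "has_grad g a w"
  shows "has_grad (\<lambda>x. f x - g x) a (vsub v w)"
  unfolding has_grad_def
proof (intro conjI allI impI)
  have lv: "is_l2 v" and lw: "is_l2 w"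
    using fv gw by (auto simp: has_grad_def)
  then show "is_l2 (vsub v w)"
    by simp
  fix \<epsilon> :: real
  assume "\<epsilon> > 0"
  then have e2: "\<epsilon>/2 > 0"
    by simp
  obtain d1 where d1: "d1 > 0" "\<forall>h. is_l2 h \<and> l2norm h < d1 \<longrightarrow>
      cmod (f (vadd a h) - f a - l2inner h v) \<le> (\<epsilon>/2) * l2norm h"
    using fv e2 unfolding has_grad_def by blast
  obtain d2 where d2: "d2 > 0" "\<forall>h. is_l2 h \<and> l2norm h < d2 \<longrightarrow>
      cmod (g (vadd a h) - g a - l2inner h w) \<le> (\<epsilon>/2) * l2norm h"
    using gw e2 unfolding has_grad_def by blast
  have "cmod (f (vadd a h) - g (vadd a h) - (f a - g a) - l2inner h (vsub v w)) \<le> \<epsilon> * l2norm h"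
    if h: "is_l2 h \<and> l2norm h < min d1 d2" for h
  proof -
    have "f (vadd a h) - g (vadd a h) - (f a - g a) - l2inner h (vsub v w)
        = (f (vadd a h) - f a - l2inner h v) - (g (vadd a h) - g a - l2inner h w)"
      using h lv lw by (simp add: l2inner_vsub_right)
    then have "cmod (f (vadd a h) - g (vadd a h) - (f a - g a) - l2inner h (vsub v w))
        \<le> cmod (f (vadd a h) - f a - l2inner h v) + cmod (g (vadd a h) - g a - l2inner h w)"
      by (metis norm_triangle_ineq4)
    also have "\<dots> \<le> (\<epsilon>/2) * l2norm h + (\<epsilon>/2) * l2norm h"
      using d1(2) d2(2) h by (intro add_mono) auto
    finally show ?thesis
      by simp
  qed
  then show "\<exists>\<delta>>0. \<forall>h. is_l2 h \<and> l2norm h < \<delta> \<longrightarrow>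
      cmod (f (vadd a h) - g (vadd a h) - (f a - g a) - l2inner h (vsub v w)) \<le> \<epsilon> * l2norm h"
    using d1(1) d2(1) by (intro exI[of _ "min d1 d2"]) auto
qed

lemma hol_fun_diff: "hol_fun f \<Longrightarrow> hol_fun g \<Longrightarrow> hol_fun (\<lambda>x. f x - g x)"
  by (rule hol_funI) (blast intro: has_grad_diff has_grad_grad)

lemma grad_diff:
  "hol_fun f \<Longrightarrow> hol_fun g \<Longrightarrow> a \<in> BE \<Longrightarrow> grad (\<lambda>x. f x - g x) a = vsub (grad f a) (grad g a)"
  by (intro grad_eqI has_grad_diff has_grad_grad)

lemma grad_eq_zerovec_if_vanishing:
  assumes vanish: "\<And>x. x \<in> BE \<Longrightarrow> g x = 0" and a: "a \<in> BE"
  shows "grad g a = zerovec"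
proof (rule grad_eqI)
  have "l2norm a < 1"
    using a by (simp add: BE_iff)
  then show "has_grad g a zerovec"
    unfolding has_grad_def using a vanish vadd_in_BE[OF a]
    by (intro conjI allI impI is_l2_zerovec exI[of _ "1 - l2norm a"]) auto
qed

lemma has_field_derivative_remainder:
  assumes "(G has_field_derivative D) (at z)" "\<epsilon> > 0"
  obtains \<delta> where "\<delta> > 0" "\<And>t. cmod t < \<delta> \<Longrightarrow> cmod (G (z + t) - G z - D * t) \<le> \<epsilon> * cmod t"
proof -
  have "((\<lambda>y. (G y - G z) / (y - z)) \<longlongrightarrow> D) (at z)"
    using assms(1) has_field_derivative_iff by blast
  from LIM_D[OF this assms(2)] obtain s where s: "s > 0"
    "\<And>y. y \<noteq> z \<and> cmod (y - z) < s \<Longrightarrow> cmod ((G y - G z) / (y - z) - D) < \<epsilon>"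
    by blast
  have "cmod (G (z + t) - G z - D * t) \<le> \<epsilon> * cmod t" if "cmod t < s" for t
  proof (cases "t = 0")
    case False
    have "G (z + t) - G z - D * t = ((G (z + t) - G z) / t - D) * t"
      using False by (simp add: field_simps)
    then show ?thesis
      using s(2)[of "z + t"] that False by (simp add: norm_mult mult_right_mono)
  qed simp
  with s(1) that show ?thesis
    by blast
qed

lemma has_grad_compose:
  assumes fp: "has_grad p z w" and G: "(G has_field_derivative D) (at (p z))"
  shows "has_grad (\<lambda>x. G (p x)) z (smul (cnj D) w)"
  unfolding has_grad_def
proof (intro conjI allI impI)
  have lw: "is_l2 w"
    using fp by (simp add: has_grad_def)
  then show "is_l2 (smul (cnj D) w)"
    by simp
  fix \<epsilon> :: real
  assume ep: "\<epsilon> > 0"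
  define K where "K = l2norm w + 1"
  have K: "K > 0"
    by (simp add: K_def add_nonneg_pos)
  have DK: "cmod D + 1 > 0"
    by (simp add: add_nonneg_pos)
  obtain d1 where d1: "d1 > 0" "\<forall>h. is_l2 h \<and> l2norm h < d1 \<longrightarrow>
      cmod (p (vadd z h) - p z - l2inner h w) \<le> 1 * l2norm h"
    using fp unfolding has_grad_def by (meson zero_less_one)
  obtain d2 where d2: "d2 > 0" "\<And>t. cmod t < d2 \<Longrightarrow>
      cmod (G (p z + t) - G (p z) - D * t) \<le> (\<epsilon> / (2 * K)) * cmod t"
    using has_field_derivative_remainder[OF G, of "\<epsilon> / (2 * K)"] ep K by auto
  obtain d3 where d3: "d3 > 0" "\<forall>h. is_l2 h \<and> l2norm h < d3 \<longrightarrow>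
      cmod (p (vadd z h) - p z - l2inner h w) \<le> (\<epsilon> / (2 * (cmod D + 1))) * l2norm h"
    using fp ep DK unfolding has_grad_def by (metis divide_pos_pos mult_pos_pos zero_less_numeral)
  have "cmod (G (p (vadd z h)) - G (p z) - l2inner h (smul (cnj D) w)) \<le> \<epsilon> * l2norm h"
    if hh: "is_l2 h \<and> l2norm h < min d1 (min d3 (d2 / K))" for h
  proof -
    define t where "t = p (vadd z h) - p z"
    have "cmod t \<le> cmod (t - l2inner h w) + cmod (l2inner h w)"
      by (metis add.commute diff_add_cancel norm_triangle_ineq)
    also have "\<dots> \<le> l2norm h + l2norm h * l2norm w"
      using d1(2) hh l2inner_cauchy_schwarz[of h w] lw by (intro add_mono) (auto simp: t_def)
    finally have tb: "cmod t \<le> K * l2norm h"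
      by (simp add: K_def algebra_simps)
    have "K * l2norm h < K * (d2 / K)"
      using hh K by (intro mult_strict_left_mono) auto
    then have "cmod t < d2"
      using tb K by simp
    then have "cmod (G (p z + t) - G (p z) - D * t) \<le> (\<epsilon> / (2 * K)) * cmod t"
      by (rule d2(2))
    also have "\<dots> \<le> (\<epsilon> / (2 * K)) * (K * l2norm h)"
      using tb ep K by (intro mult_left_mono) auto
    finally have e2: "cmod (G (p z + t) - G (p z) - D * t) \<le> (\<epsilon> / (2 * K)) * (K * l2norm h)" .
    have e3: "cmod D * cmod (t - l2inner h w) \<le> cmod D * ((\<epsilon> / (2 * (cmod D + 1))) * l2norm h)"
      using d3(2) hh by (intro mult_left_mono) (auto simp: t_def)
    have "G (p (vadd z h)) - G (p z) - l2inner h (smul (cnj D) w)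
        = (G (p z + t) - G (p z) - D * t) + D * (t - l2inner h w)"
      using hh lw by (simp add: l2inner_smul_right t_def algebra_simps)
    then have "cmod (G (p (vadd z h)) - G (p z) - l2inner h (smul (cnj D) w))
        \<le> cmod (G (p z + t) - G (p z) - D * t) + cmod D * cmod (t - l2inner h w)"
      by (metis norm_mult norm_triangle_ineq)
    also have "\<dots> \<le> (\<epsilon> / (2 * K)) * (K * l2norm h) + cmod D * ((\<epsilon> / (2 * (cmod D + 1))) * l2norm h)"
      using e2 e3 by (rule add_mono)
    also have "\<dots> = (\<epsilon>/2) * l2norm h + (\<epsilon>/2) * (cmod D / (cmod D + 1)) * l2norm h"
      using K DK by (simp add: field_simps)
    also have "\<dots> \<le> (\<epsilon>/2) * l2norm h + (\<epsilon>/2) * 1 * l2norm h"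
      using ep DK by (intro add_left_mono mult_right_mono mult_left_mono) auto
    finally show ?thesis
      by simp
  qed
  then show "\<exists>\<delta>>0. \<forall>h. is_l2 h \<and> l2norm h < \<delta> \<longrightarrow>
      cmod (G (p (vadd z h)) - G (p z) - l2inner h (smul (cnj D) w)) \<le> \<epsilon> * l2norm h"
    using d1(1) d2(1) d3(1) K by (intro exI[of _ "min d1 (min d3 (d2 / K))"]) auto
qed

lemma has_grad_component: "has_grad (\<lambda>x. x k) a (basis_vec k)"
  unfolding has_grad_def by (simp add: vadd_def)

lemma has_grad_coordinate:
  assumes G: "G holomorphic_on ball 0 1" and a: "a \<in> BE"
  shows "has_grad (\<lambda>x. G (x k)) a (smul (cnj (deriv G (a k))) (basis_vec k))"
proof (rule has_grad_compose[OF has_grad_component])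
  show "(G has_field_derivative deriv G (a k)) (at (a k))"
    using holomorphic_derivI[OF G open_ball, of "a k" UNIV] norm_less_1_if_BE[OF a] by simp
qed

lemma hol_fun_coordinate: "G holomorphic_on ball 0 1 \<Longrightarrow> hol_fun (\<lambda>x. G (x k))"
  by (rule hol_funI) (blast intro: has_grad_coordinate)

lemma grad_coordinate:
  "G holomorphic_on ball 0 1 \<Longrightarrow> a \<in> BE \<Longrightarrow>
   grad (\<lambda>x. G (x k)) a = smul (cnj (deriv G (a k))) (basis_vec k)"
  by (intro grad_eqI has_grad_coordinate)

lemma hol_selfmap_in_BE: "hol_selfmap \<phi> \<Longrightarrow> x \<in> BE \<Longrightarrow> \<phi> x \<in> BE"
  unfolding hol_selfmap_def by blast

lemma hol_fun_hol_selfmap_component: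
  fixes \<phi> :: "'g vec \<Rightarrow> 'g vec"
  assumes hs: "hol_selfmap \<phi>"
  shows "hol_fun (\<lambda>x. \<phi> x k)"
  unfolding hol_fun_def
proof
  fix a :: "'g vec"
  assume a: "a \<in> BE"
  obtain T where T: "\<forall>x. is_l2 x \<longrightarrow> is_l2 (T x)"
      "\<forall>x y. is_l2 x \<longrightarrow> is_l2 y \<longrightarrow> T (vadd x y) = vadd (T x) (T y)"
      "\<forall>c x. is_l2 x \<longrightarrow> T (smul c x) = smul c (T x)"
      "\<exists>C. \<forall>x. is_l2 x \<longrightarrow> l2norm (T x) \<le> C * l2norm x"
      "\<forall>\<epsilon>>0. \<exists>\<delta>>0. \<forall>h. is_l2 h \<and> l2norm h < \<delta> \<longrightarrow>
          l2norm (vsub (vsub (\<phi> (vadd a h)) (\<phi> a)) (T h)) \<le> \<epsilon> * l2norm h"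
    using hs a unfolding hol_selfmap_def by blast
  obtain C where C: "\<forall>x. is_l2 x \<longrightarrow> l2norm (T x) \<le> C * l2norm x"
    using T(4) by blast
  have remainder: "\<exists>\<delta>>0. \<forall>h. is_l2 h \<and> l2norm h < \<delta> \<longrightarrow>
      cmod (\<phi> (vadd a h) k - \<phi> a k - T h k) \<le> \<epsilon> * l2norm h" if eps: "\<epsilon> > 0" for \<epsilon>
  proof -
    obtain \<delta> where d: "\<delta> > 0" "\<forall>h. is_l2 h \<and> l2norm h < \<delta> \<longrightarrow>
        l2norm (vsub (vsub (\<phi> (vadd a h)) (\<phi> a)) (T h)) \<le> \<epsilon> * l2norm h"
      using T(5) eps by blast
    have "cmod (\<phi> (vadd a h) k - \<phi> a k - T h k) \<le> \<epsilon> * l2norm h"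
      if h: "is_l2 h" "l2norm h < min \<delta> (1 - l2norm a)" for h
    proof -
      have "vadd a h \<in> BE"
        using vadd_in_BE[OF a] h by simp
      then have "is_l2 (vsub (vsub (\<phi> (vadd a h)) (\<phi> a)) (T h))"
        using hol_selfmap_in_BE[OF hs] hol_selfmap_in_BE[OF hs a] T(1) h by (simp add: BE_iff)
      then have "cmod (\<phi> (vadd a h) k - \<phi> a k - T h k)
          \<le> l2norm (vsub (vsub (\<phi> (vadd a h)) (\<phi> a)) (T h))"
        using norm_le_l2norm[of _ k] by (simp add: vsub_def)
      also have "\<dots> \<le> \<epsilon> * l2norm h"
        using d(2) h by simp
      finally show ?thesis .
    qed
    then show ?thesis
      using d(1) a by (intro exI[of _ "min \<delta> (1 - l2norm a)"]) (auto simp: BE_iff)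
  qed
  have "cmod (T x k) \<le> C * l2norm x" if "is_l2 x" for x
    using norm_le_l2norm[of "T x" k] T(1) C that by (meson order_trans)
  with T(2,3) remainder show "\<exists>L. (\<forall>x y. is_l2 x \<longrightarrow> is_l2 y \<longrightarrow> L (vadd x y) = L x + L y) \<and>
      (\<forall>c x. is_l2 x \<longrightarrow> L (smul c x) = c * L x) \<and>
      (\<exists>C. \<forall>x. is_l2 x \<longrightarrow> cmod (L x) \<le> C * l2norm x) \<and>
      (\<forall>\<epsilon>>0. \<exists>\<delta>>0. \<forall>h. is_l2 h \<and> l2norm h < \<delta> \<longrightarrow>
          cmod (\<phi> (vadd a h) k - \<phi> a k - L h) \<le> \<epsilon> * l2norm h)"
    by (intro exI[of _ "\<lambda>h. T h k"]) (simp add: vadd_def smul_def, blast)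
qed

lemma has_grad_slice_derivative:
  assumes fv: "has_grad h (smul t0 x) v" and lx: "is_l2 x"
  shows "((\<lambda>\<mu>. h (smul \<mu> x)) has_field_derivative l2inner x v) (at t0)"
  unfolding has_field_derivative_iff
proof (rule LIM_I)
  fix r :: real
  assume r: "r > 0"
  have lv: "is_l2 v"
    using fv by (simp add: has_grad_def)
  define K where "K = l2norm x + 1"
  have K: "K > 0"
    by (simp add: K_def add_nonneg_pos)
  obtain \<delta> where d: "\<delta> > 0" "\<forall>hh. is_l2 hh \<and> l2norm hh < \<delta> \<longrightarrow>
      cmod (h (vadd (smul t0 x) hh) - h (smul t0 x) - l2inner hh v) \<le> (r / (2 * K)) * l2norm hh"
    using fv r K unfolding has_grad_def by (metis divide_pos_pos mult_pos_pos zero_less_numeral)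
  have "norm ((h (smul w x) - h (smul t0 x)) / (w - t0) - l2inner x v) < r"
    if w: "w \<noteq> t0" "norm (w - t0) < \<delta> / K" for w
  proof -
    have nhh: "l2norm (smul (w - t0) x) = cmod (w - t0) * l2norm x"
      using lx by (simp add: l2norm_smul)
    have "cmod (w - t0) * l2norm x \<le> cmod (w - t0) * K"
      by (intro mult_left_mono) (auto simp: K_def)
    also have "\<dots> < \<delta>"
      using w K by (simp add: field_simps)
    finally have "l2norm (smul (w - t0) x) < \<delta>"
      using nhh by simp
    moreover have "vadd (smul t0 x) (smul (w - t0) x) = smul w x"
      by (auto simp: vadd_def smul_def algebra_simps)
    moreover have "l2inner (smul (w - t0) x) v = (w - t0) * l2inner x v"
      using lx lv by (simp add: l2inner_smul_left)
    ultimately have E: "cmod (h (smul w x) - h (smul t0 x) - (w - t0) * l2inner x v)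
        \<le> (r / (2 * K)) * (cmod (w - t0) * l2norm x)"
      using d(2) lx nhh by (metis is_l2_smul)
    have "(h (smul w x) - h (smul t0 x)) / (w - t0) - l2inner x v
        = (h (smul w x) - h (smul t0 x) - (w - t0) * l2inner x v) / (w - t0)"
      using w by (simp add: field_simps)
    then have "norm ((h (smul w x) - h (smul t0 x)) / (w - t0) - l2inner x v)
        = cmod (h (smul w x) - h (smul t0 x) - (w - t0) * l2inner x v) / cmod (w - t0)"
      by (simp add: norm_divide)
    also have "\<dots> \<le> (r / (2 * K)) * (cmod (w - t0) * l2norm x) / cmod (w - t0)"
      using E by (rule divide_right_mono) simp
    also have "\<dots> = (r / 2) * (l2norm x / K)"
      using w by simp
    also have "\<dots> \<le> r / 2"
      using r K by (intro mult_left_le) (auto simp: K_def)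
    also have "\<dots> < r"
      using r by simp
    finally show ?thesis .
  qed
  then show "\<exists>s>0. \<forall>w. w \<noteq> t0 \<and> norm (w - t0) < s \<longrightarrow>
      norm ((h (smul w x) - h (smul t0 x)) / (w - t0) - l2inner x v) < r"
    using d(1) K by (intro exI[of _ "\<delta> / K"]) auto
qed

section \<open>Moebius transformations\<close>

definition mobius_s :: "'g vec \<Rightarrow> real" where
  "mobius_s x = sqrt (1 - (l2norm x)\<^sup>2)"

text \<open>The derivative of \<open>mobius x\<close> at the origin (see \<open>mobius_eq\<close>); being self-adjoint, it also
  carries \<open>grad h x\<close> to the gradient of \<open>h \<circ> mobius x\<close> at the origin.\<close>

definition mobius_deriv :: "'g vec \<Rightarrow> 'g vec \<Rightarrow> 'g vec" where
  "mobius_deriv x v = vadd (smul (- complex_of_real (mobius_s x)) v)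
      (smul (complex_of_real (mobius_s x - (mobius_s x)\<^sup>2) * l2inner v x
        / complex_of_real ((l2norm x)\<^sup>2)) x)"

lemma mobius_s_power2: "x \<in> BE \<Longrightarrow> (mobius_s x)\<^sup>2 = 1 - (l2norm x)\<^sup>2"
  using l2norm_power2_less_1[of x] by (simp add: mobius_s_def)

lemma is_l2_mobius_deriv [simp]: "is_l2 x \<Longrightarrow> is_l2 v \<Longrightarrow> is_l2 (mobius_deriv x v)"
  by (simp add: mobius_deriv_def)

lemma mobius_eq:
  assumes x: "x \<in> BE" and y: "is_l2 y" and c1: "l2inner y x \<noteq> 1"
  shows "mobius x y = vadd x (smul (1 / (1 - l2inner y x)) (mobius_deriv x y))"
proof (cases "l2norm x = 0")
  case True
  then have "x = zerovec"
    using x l2norm_eq_0D by (auto simp: BE_iff)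
  then show ?thesis
    by (auto simp: mobius_def Let_def projP_def mobius_deriv_def mobius_s_def vadd_def smul_def
        vsub_def zerovec_def l2norm_zerovec[unfolded zerovec_def])
next
  case False
  have lx: "is_l2 x"
    using x by (simp add: BE_iff)
  define c where "c = l2inner y x"
  define N where "N = complex_of_real ((l2norm x)\<^sup>2)"
  define S where "S = complex_of_real (mobius_s x)"
  define q where "q = 1 / (1 - c)"
  have S2: "S\<^sup>2 = 1 - N"
    using mobius_s_power2[OF x] by (simp add: S_def N_def flip: of_real_power)
  have q: "q * (1 - c) = 1"
    using c1 by (simp add: q_def c_def)
  have N: "N * (1 / N) = 1"
    using False by (simp add: N_def)
  have proj: "l2inner (smul q (vsub x y)) x = q * (N - c)"
    using lx y by (simp add: c_def N_def l2inner_smul_left l2inner_vsub_left l2inner_self)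
  show ?thesis
  proof
    fix k
    have "mobius x y k = S * (q * (x k - y k) - (q * (N - c) * (1/N)) * x k) + (q * (N - c) * (1/N)) * x k"
      unfolding mobius_def Let_def projP_def c_def[symmetric] q_def[symmetric] proj
      using False by (simp add: vadd_def smul_def vsub_def S_def N_def mobius_s_def zerovec_def)
    also have "\<dots> = x k + q * (- S * y k + (S - S\<^sup>2) * (c * (1/N)) * x k)"
      using S2 q N by algebra
    finally show "mobius x y k = vadd x (smul (1 / (1 - l2inner y x)) (mobius_deriv x y)) k"
      by (simp add: vadd_def smul_def mobius_deriv_def c_def S_def N_def q_def)
  qed
qed

lemma mobius_deriv_smul:
  "is_l2 x \<Longrightarrow> is_l2 v \<Longrightarrow> mobius_deriv x (smul c v) = smul c (mobius_deriv x v)"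
proof -
  assume "is_l2 x" "is_l2 v"
  then have "l2inner (smul c v) x = c * l2inner v x"
    by (simp add: l2inner_smul_left)
  then show ?thesis
    unfolding mobius_deriv_def by (simp add: vadd_def smul_def algebra_simps)
qed

lemma mobius_zerovec: "x \<in> BE \<Longrightarrow> mobius x zerovec = x"
  using mobius_eq[of x zerovec] mobius_deriv_smul[of x zerovec 0]
  by (simp add: BE_iff) (simp add: vadd_def smul_def zerovec_def)

lemma mobius_deriv_adjoint:
  assumes "is_l2 x" "is_l2 y" "is_l2 v"
  shows "l2inner (mobius_deriv x y) v = l2inner y (mobius_deriv x v)"
proof -
  have "l2inner (mobius_deriv x y) v = - complex_of_real (mobius_s x) * l2inner y v
      + complex_of_real (mobius_s x - (mobius_s x)\<^sup>2) * l2inner y x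
        / complex_of_real ((l2norm x)\<^sup>2) * l2inner x v"
    using assms by (simp add: mobius_deriv_def l2inner_vadd_left l2inner_smul_left)
  also have "\<dots> = l2inner y (mobius_deriv x v)"
    using assms by (simp add: mobius_deriv_def l2inner_vadd_right l2inner_smul_right l2inner_swap[of v x])
  finally show ?thesis .
qed

lemma l2norm_mobius_deriv_power2:
  assumes x: "x \<in> BE" and v: "is_l2 v"
  shows "(l2norm (mobius_deriv x v))\<^sup>2 = (1 - (l2norm x)\<^sup>2) * ((l2norm v)\<^sup>2 - (cmod (l2inner v x))\<^sup>2)"
proof (cases "l2norm x = 0")
  case True
  then have "x = zerovec"
    using x l2norm_eq_0D by (auto simp: BE_iff)
  then have "mobius_deriv x v = smul (-1) v"
    by (simp add: mobius_deriv_def mobius_s_def vadd_def smul_def zerovec_def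
        l2norm_zerovec[unfolded zerovec_def])
  then show ?thesis
    using v \<open>x = zerovec\<close> by (simp add: l2norm_smul)
next
  case False
  have lx: "is_l2 x"
    using x by (simp add: BE_iff)
  define s where "s = mobius_s x"
  define N where "N = (l2norm x)\<^sup>2"
  define c where "c = l2inner v x"
  define r where "r = (s - s\<^sup>2) / N"
  have s2: "s\<^sup>2 = 1 - N"
    using mobius_s_power2[OF x] by (simp add: s_def N_def)
  have N: "N \<noteq> 0"
    using False by (simp add: N_def)
  have s0: "s \<ge> 0"
    using l2norm_power2_less_1[OF x] by (simp add: s_def mobius_s_def)
  have "mobius_deriv x v = vadd (smul (- complex_of_real s) v) (smul (complex_of_real r * c) x)"
    by (simp add: mobius_deriv_def s_def r_def c_def N_def)
  then have "(l2norm (mobius_deriv x v))\<^sup>2 = (s * l2norm v)\<^sup>2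
      + 2 * Re (l2inner (smul (- complex_of_real s) v) (smul (complex_of_real r * c) x))
      + (cmod (complex_of_real r * c) * l2norm x)\<^sup>2"
    using v lx s0 l2norm_power2_less_1[OF x] by (simp add: l2norm_vadd_power2 l2norm_smul)
  also have "l2inner (smul (- complex_of_real s) v) (smul (complex_of_real r * c) x)
      = - complex_of_real (s * r * (cmod c)\<^sup>2)"
    using v lx
    by (simp add: l2inner_smul_left l2inner_smul_right c_def complex_norm_square mult.commute
        del: of_real_power)
  finally have "(l2norm (mobius_deriv x v))\<^sup>2
      = s\<^sup>2 * (l2norm v)\<^sup>2 + 2 * (- (s * r * (cmod c)\<^sup>2)) + r\<^sup>2 * (cmod c)\<^sup>2 * N"
    by (simp add: N_def norm_mult power_mult_distrib)
  also have "\<dots> = s\<^sup>2 * ((l2norm v)\<^sup>2 - (cmod c)\<^sup>2)"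
  proof -
    have "r * N = s - s\<^sup>2"
      using N by (simp add: r_def)
    then show ?thesis
      using s2 N by algebra
  qed
  finally show ?thesis
    using mobius_s_power2[OF x] by (simp add: s_def c_def)
qed

lemma l2norm_mobius_deriv_ge:
  assumes x: "x \<in> BE" and v: "is_l2 v"
  shows "(1 - (l2norm x)\<^sup>2) * l2norm v \<le> l2norm (mobius_deriv x v)"
proof -
  have cs: "(cmod (l2inner v x))\<^sup>2 \<le> (l2norm v)\<^sup>2 * (l2norm x)\<^sup>2"
    using l2inner_cauchy_schwarz[OF v, of x] x
    by (simp add: BE_iff power_mono flip: power_mult_distrib)
  have "((1 - (l2norm x)\<^sup>2) * l2norm v)\<^sup>2
      = (1 - (l2norm x)\<^sup>2) * ((l2norm v)\<^sup>2 - (l2norm v)\<^sup>2 * (l2norm x)\<^sup>2)"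
    by (simp add: power2_eq_square algebra_simps)
  also have "\<dots> \<le> (1 - (l2norm x)\<^sup>2) * ((l2norm v)\<^sup>2 - (cmod (l2inner v x))\<^sup>2)"
    using cs l2norm_power2_less_1[OF x] by (intro mult_left_mono) auto
  also have "\<dots> = (l2norm (mobius_deriv x v))\<^sup>2"
    using l2norm_mobius_deriv_power2[OF x v] by simp
  finally show ?thesis
    by (rule power2_le_imp_le) simp
qed

lemma l2norm_mobius_deriv_le:
  assumes x: "x \<in> BE" and v: "is_l2 v"
  shows "l2norm (mobius_deriv x v) \<le> l2norm v"
proof -
  have "(1 - (l2norm x)\<^sup>2) * ((l2norm v)\<^sup>2 - (cmod (l2inner v x))\<^sup>2)
      \<le> 1 * ((l2norm v)\<^sup>2 - 0)"
  proof (cases "(cmod (l2inner v x))\<^sup>2 \<le> (l2norm v)\<^sup>2")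
    case True
    then show ?thesis
      using l2norm_power2_less_1[OF x] by (intro mult_mono) auto
  next
    case False
    then have "(1 - (l2norm x)\<^sup>2) * ((l2norm v)\<^sup>2 - (cmod (l2inner v x))\<^sup>2) \<le> 0"
      using l2norm_power2_less_1[OF x] by (intro mult_nonneg_nonpos) auto
    then show ?thesis
      by (simp add: order_trans)
  qed
  then show ?thesis
    using l2norm_mobius_deriv_power2[OF x v] by (simp add: power2_le_imp_le)
qed

lemma l2norm_mobius_deriv_basis_vec:
  assumes x: "x \<in> BE"
  shows "l2norm (mobius_deriv x (basis_vec k)) \<le> 1 - (cmod (x k))\<^sup>2"
proof -
  have "cmod (x k) \<le> l2norm x"
    using x by (simp add: BE_iff norm_le_l2norm)
  then have xk: "(cmod (x k))\<^sup>2 \<le> (l2norm x)\<^sup>2"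
    by (rule power_mono) simp
  have nonneg: "0 \<le> 1 - (cmod (x k))\<^sup>2"
    using xk l2norm_power2_less_1[OF x] by linarith
  have "(l2norm (mobius_deriv x (basis_vec k)))\<^sup>2 = (1 - (l2norm x)\<^sup>2) * (1 - (cmod (x k))\<^sup>2)"
    using l2norm_mobius_deriv_power2[OF x is_l2_basis_vec, of k]
    by (simp only: l2norm_basis_vec l2inner_basis_vec_left complex_mod_cnj power_one)
  also have "\<dots> \<le> (1 - (cmod (x k))\<^sup>2)\<^sup>2"
    unfolding power2_eq_square[of "1 - _"] using xk nonneg by (intro mult_right_mono) auto
  finally show ?thesis
    using nonneg by (rule power2_le_imp_le)
qed

lemma mobius_expansion:
  assumes x: "x \<in> BE" and y: "is_l2 y" and small: "l2norm y < 1/2"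
  obtains d where "mobius x y = vadd x d" "is_l2 d" "l2norm d \<le> 2 * l2norm y"
    "\<And>v. is_l2 v \<Longrightarrow>
      cmod (l2inner d v - l2inner y (mobius_deriv x v)) \<le> 2 * (l2norm y)\<^sup>2 * l2norm (mobius_deriv x v)"
proof -
  have lx: "is_l2 x"
    using x by (simp add: BE_iff)
  define c where "c = l2inner y x"
  have c: "cmod c \<le> l2norm y"
    using norm_l2inner_le_if_BE[OF x y] l2inner_swap[of y x] by (simp add: c_def)
  then have c1: "cmod (1 - c) \<ge> 1/2"
    using small norm_triangle_ineq2[of 1 c] by simp
  define d where "d = smul (1 / (1 - c)) (mobius_deriv x y)"
  have "c \<noteq> 1"
    using c1 by auto
  then have mob: "mobius x y = vadd x d"
    using mobius_eq[OF x y] by (simp add: d_def c_def)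
  have ld: "is_l2 d"
    using lx y by (simp add: d_def)
  have dn: "l2norm d \<le> 2 * l2norm y"
  proof -
    have "l2norm d = l2norm (mobius_deriv x y) / cmod (1 - c)"
      using lx y by (simp add: d_def l2norm_smul norm_divide)
    also have "\<dots> \<le> l2norm y / (1/2)"
      using l2norm_mobius_deriv_le[OF x y] c1 by (intro frac_le) auto
    finally show ?thesis
      by simp
  qed
  have est: "cmod (l2inner d v - l2inner y (mobius_deriv x v))
      \<le> 2 * (l2norm y)\<^sup>2 * l2norm (mobius_deriv x v)" if v: "is_l2 v" for v
  proof -
    define u where "u = mobius_deriv x v"
    have lu: "is_l2 u"
      using lx v by (simp add: u_def)
    have "l2inner d v = (1 / (1 - c)) * l2inner y u"
      using lx y v by (simp add: d_def l2inner_smul_left mobius_deriv_adjoint u_def)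
    then have "l2inner d v - l2inner y u = (c / (1 - c)) * l2inner y u"
      using \<open>c \<noteq> 1\<close> by (simp add: field_simps)
    then have "cmod (l2inner d v - l2inner y u) = cmod c / cmod (1 - c) * cmod (l2inner y u)"
      by (simp add: norm_mult norm_divide)
    also have "\<dots> \<le> l2norm y / (1/2) * (l2norm y * l2norm u)"
      using c c1 l2inner_cauchy_schwarz[OF y lu] by (intro mult_mono frac_le) auto
    finally show ?thesis
      by (simp add: u_def power2_eq_square)
  qed
  show ?thesis
    using mob ld dn est by (rule that)
qed

lemma has_grad_mobius_compose:
  assumes x: "x \<in> BE" and hv: "has_grad h x v"
  shows "has_grad (h \<circ> mobius x) zerovec (mobius_deriv x v)"
  unfolding has_grad_def
proof (intro conjI allI impI)
  have lv: "is_l2 v"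
    using hv by (simp add: has_grad_def)
  define u where "u = mobius_deriv x v"
  have lu: "is_l2 u"
    using x lv by (simp add: u_def BE_iff)
  then show "is_l2 (mobius_deriv x v)"
    by (simp add: u_def)
  fix \<epsilon> :: real
  assume ep: "\<epsilon> > 0"
  then obtain d' where d': "d' > 0" "\<forall>h'. is_l2 h' \<and> l2norm h' < d' \<longrightarrow>
      cmod (h (vadd x h') - h x - l2inner h' v) \<le> (\<epsilon>/4) * l2norm h'"
    using hv unfolding has_grad_def by (meson divide_pos_pos zero_less_numeral)
  define K where "K = l2norm u + 1"
  have K: "K > 0"
    by (simp add: K_def add_nonneg_pos)
  define \<delta> where "\<delta> = min (1/2) (min (d'/2) (\<epsilon> / (4 * K)))"
  have "cmod ((h \<circ> mobius x) (vadd zerovec y) - (h \<circ> mobius x) zerovec - l2inner y u) \<le> \<epsilon> * l2norm y"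
    if y: "is_l2 y" "l2norm y < \<delta>" for y
  proof -
    have "l2norm y < 1/2"
      using y(2) by (simp add: \<delta>_def)
    then obtain d where d: "mobius x y = vadd x d" "is_l2 d" "l2norm d \<le> 2 * l2norm y"
      "\<And>w. is_l2 w \<Longrightarrow> cmod (l2inner d w - l2inner y (mobius_deriv x w))
        \<le> 2 * (l2norm y)\<^sup>2 * l2norm (mobius_deriv x w)"
      using mobius_expansion[OF x y(1)] by blast
    have "l2norm d < d'"
      using d(3) y(2) by (simp add: \<delta>_def)
    then have "cmod (h (vadd x d) - h x - l2inner d v) \<le> (\<epsilon>/4) * l2norm d"
      using d'(2) d(2) by blast
    also have "\<dots> \<le> (\<epsilon>/2) * l2norm y"
      using d(3) ep by simp
    finally have e1: "cmod (h (vadd x d) - h x - l2inner d v) \<le> (\<epsilon>/2) * l2norm y" .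
    have "l2norm y \<le> \<epsilon> / (4 * K)"
      using y(2) by (simp add: \<delta>_def)
    then have "2 * (l2norm y)\<^sup>2 * l2norm u \<le> 2 * (\<epsilon> / (4 * K)) * l2norm y * l2norm u"
      using mult_right_mono[of "l2norm y" "\<epsilon> / (4 * K)" "l2norm y * l2norm u"]
      by (simp add: power2_eq_square mult.assoc)
    also have "\<dots> \<le> (\<epsilon>/2) * l2norm y"
      using ep K by (simp add: K_def field_simps mult_right_mono)
    finally have e2: "cmod (l2inner d v - l2inner y u) \<le> (\<epsilon>/2) * l2norm y"
      using d(4)[OF lv] unfolding u_def by linarith
    have "(h \<circ> mobius x) (vadd zerovec y) - (h \<circ> mobius x) zerovec - l2inner y u
        = (h (vadd x d) - h x - l2inner d v) + (l2inner d v - l2inner y u)"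
      using d(1) mobius_zerovec[OF x] by (simp add: vadd_def zerovec_def)
    then have "cmod ((h \<circ> mobius x) (vadd zerovec y) - (h \<circ> mobius x) zerovec - l2inner y u)
        \<le> cmod (h (vadd x d) - h x - l2inner d v) + cmod (l2inner d v - l2inner y u)"
      by (metis norm_triangle_ineq)
    then show ?thesis
      using e1 e2 by linarith
  qed
  moreover have "\<delta> > 0"
    using d' ep K by (simp add: \<delta>_def)
  ultimately show "\<exists>\<delta>>0. \<forall>y. is_l2 y \<and> l2norm y < \<delta> \<longrightarrow>
      cmod ((h \<circ> mobius x) (vadd zerovec y) - (h \<circ> mobius x) zerovec - l2inner y (mobius_deriv x v))
        \<le> \<epsilon> * l2norm y"
    by (auto simp: u_def)
qed

lemma grad_mobius_compose:
  "hol_fun h \<Longrightarrow> x \<in> BE \<Longrightarrow> grad (h \<circ> mobius x) zerovec = mobius_deriv x (grad h x)"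
  by (intro grad_eqI has_grad_mobius_compose has_grad_grad)

section \<open>Bloch norms\<close>

lemma inv_norm_nonneg: "inv_norm h \<ge> 0"
  unfolding inv_norm_def by (rule SUP_upper2[of zerovec]) (auto simp: BE_iff)

lemma inv_norm_lower:
  assumes h: "hol_fun h" and x: "x \<in> BE"
  shows "ereal ((1 - (l2norm x)\<^sup>2) * l2norm (grad h x)) \<le> inv_norm h"
proof -
  have "(1 - (l2norm x)\<^sup>2) * l2norm (grad h x) \<le> l2norm (grad (h \<circ> mobius x) zerovec)"
    using l2norm_mobius_deriv_ge[OF x is_l2_grad[OF h x]] grad_mobius_compose[OF h x] by simp
  also have "ereal (l2norm (grad (h \<circ> mobius x) zerovec)) \<le> inv_norm h"
    unfolding inv_norm_def using x by (rule SUP_upper2) simp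
  finally show ?thesis
    by simp
qed

lemma inv_norm_le_bloch_norm: "inv_norm h \<le> bloch_norm h"
  unfolding bloch_norm_def by (simp add: add_increasing)

lemma norm_diff_zerovec_le_inv_norm:
  assumes h: "hol_fun h" and x: "x \<in> BE" and M: "inv_norm h \<le> ereal M"
  shows "cmod (h x - h zerovec) \<le> M / (1 - (l2norm x)\<^sup>2)"
proof -
  have lx: "is_l2 x"
    using x by (simp add: BE_iff)
  define D where "D = 1 - (l2norm x)\<^sup>2"
  have D: "D > 0"
    using l2norm_power2_less_1[OF x] by (simp add: D_def)
  have on_segment: "smul \<mu> x \<in> BE" if "\<mu> \<in> cball 0 1" for \<mu>
  proof -
    have "cmod \<mu> * l2norm x \<le> l2norm x"
      using that by (simp add: mult_left_le_one_le)
    then show ?thesis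
      using x lx by (simp add: BE_iff l2norm_smul)
  qed
  have "cmod (h (smul 1 x) - h (smul 0 x)) \<le> (M / D) * cmod (1 - 0)"
  proof (rule field_differentiable_bound[of "cball 0 1"])
    show "((\<lambda>\<mu>. h (smul \<mu> x)) has_field_derivative l2inner x (grad h (smul \<mu> x))) (at \<mu> within cball 0 1)"
      if "\<mu> \<in> cball 0 1" for \<mu>
      using has_grad_slice_derivative[OF has_grad_grad[OF h on_segment[OF that]] lx]
      by (rule has_field_derivative_at_within)
    show "cmod (l2inner x (grad h (smul \<mu> x))) \<le> M / D" if "\<mu> \<in> cball 0 1" for \<mu>
    proof -
      let ?y = "smul \<mu> x"
      have y: "?y \<in> BE"
        using on_segment[OF that] .
      have "(l2norm ?y)\<^sup>2 \<le> (l2norm x)\<^sup>2"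
        using lx that by (simp add: l2norm_smul mult_left_le_one_le power_mono)
      then have "D * l2norm (grad h ?y) \<le> (1 - (l2norm ?y)\<^sup>2) * l2norm (grad h ?y)"
        by (intro mult_right_mono) (auto simp: D_def)
      also have "\<dots> \<le> M"
        using order_trans[OF inv_norm_lower[OF h y] M] by simp
      finally have "l2norm (grad h ?y) \<le> M / D"
        using D by (simp add: field_simps)
      then show ?thesis
        using norm_l2inner_le_if_BE[OF x is_l2_grad[OF h y]] by linarith
    qed
  qed auto
  then show ?thesis
    by (simp add: D_def smul_def zerovec_def)
qed

lemma norm_le_bloch_norm:
  assumes h: "hol_fun h" and x: "x \<in> BE" and M: "bloch_norm h \<le> ereal M"
  shows "cmod (h x) \<le> M / (1 - (l2norm x)\<^sup>2)"
proof -
  define D where "D = 1 - (l2norm x)\<^sup>2"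
  have D: "0 < D" "D \<le> 1"
    using l2norm_power2_less_1[OF x] by (auto simp: D_def)
  have "inv_norm h \<le> ereal (M - cmod (h zerovec))"
    using M inv_norm_nonneg[of h] by (cases "inv_norm h") (auto simp: bloch_norm_def)
  then have "cmod (h x - h zerovec) \<le> (M - cmod (h zerovec)) / D"
    unfolding D_def by (rule norm_diff_zerovec_le_inv_norm[OF h x])
  moreover have "cmod (h zerovec) \<le> cmod (h zerovec) / D"
    using D by (simp add: le_divide_eq mult_left_le)
  ultimately have "cmod (h x) \<le> cmod (h zerovec) / D + (M - cmod (h zerovec)) / D"
    using norm_triangle_ineq2[of "h x" "h zerovec"] by linarith
  then show ?thesis
    by (simp add: D_def add_divide_distrib[symmetric])
qed

lemma bloch_norm_tendsto_zero_imp_tendsto: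
  assumes hol: "\<And>n. hol_fun (H n)" and lim: "(\<lambda>n. bloch_norm (H n)) \<longlonglongrightarrow> 0" and x: "x \<in> BE"
  shows "(\<lambda>n. H n x) \<longlonglongrightarrow> 0"
proof (rule LIMSEQ_I)
  fix e :: real
  assume e: "e > 0"
  define D where "D = 1 - (l2norm x)\<^sup>2"
  have D: "D > 0"
    using l2norm_power2_less_1[OF x] by (simp add: D_def)
  obtain N where N: "\<And>n. n \<ge> N \<Longrightarrow> bloch_norm (H n) < ereal (e * D / 2)"
    using order_tendstoD(2)[OF lim, of "ereal (e * D / 2)"] e D
    by (auto simp: eventually_sequentially zero_ereal_def)
  have "cmod (H n x) < e" if "n \<ge> N" for n
  proof -
    have "cmod (H n x) \<le> (e * D / 2) / D"
      using norm_le_bloch_norm[OF hol x less_imp_le[OF N[OF that]]] by (simp add: D_def)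
    also have "\<dots> < e"
      using e D by simp
    finally show ?thesis .
  qed
  then show "\<exists>N. \<forall>n\<ge>N. norm (H n x - 0) < e"
    by auto
qed

lemma cbloch_semi_upper:
  "t \<in> ball 0 1 \<Longrightarrow> ereal ((1 - (cmod t)\<^sup>2) * cmod (deriv G t)) \<le> cbloch_semi G"
  unfolding cbloch_semi_def by (rule SUP_upper2) auto

lemma cbloch_semi_nonneg: "cbloch_semi F \<ge> 0"
  unfolding cbloch_semi_def by (rule SUP_upper2[of 0]) auto

lemma cbloch_norm_nonneg: "cbloch_norm F \<ge> 0"
  unfolding cbloch_norm_def using cbloch_semi_nonneg[of F] by simp

lemma bloch_semi_coordinate_le:
  fixes k :: 'g
  assumes G: "G holomorphic_on ball 0 1"
  shows "bloch_semi (\<lambda>x. G (x k)) \<le> cbloch_semi G"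
  unfolding bloch_semi_def
proof (rule SUP_least)
  fix x :: "'g vec"
  assume x: "x \<in> BE"
  have "(cmod (x k))\<^sup>2 \<le> (l2norm x)\<^sup>2"
    using x by (simp add: BE_iff norm_le_l2norm power_mono)
  then have "(1 - (l2norm x)\<^sup>2) * l2norm (grad (\<lambda>x. G (x k)) x)
      \<le> (1 - (cmod (x k))\<^sup>2) * cmod (deriv G (x k))"
    by (simp add: grad_coordinate[OF G x] l2norm_smul mult_right_mono)
  then show "ereal ((1 - (l2norm x)\<^sup>2) * l2norm (grad (\<lambda>x. G (x k)) x)) \<le> cbloch_semi G"
    using cbloch_semi_upper[of "x k" G] norm_less_1_if_BE[OF x] by (meson ereal_less_eq(3) order_trans mem_ball_0)
qed

lemma inv_norm_coordinate_le:
  fixes k :: 'g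
  assumes G: "G holomorphic_on ball 0 1"
  shows "inv_norm (\<lambda>x. G (x k)) \<le> cbloch_semi G"
  unfolding inv_norm_def
proof (rule SUP_least)
  fix x :: "'g vec"
  assume x: "x \<in> BE"
  have lx: "is_l2 x"
    using x by (simp add: BE_iff)
  have "grad ((\<lambda>x. G (x k)) \<circ> mobius x) zerovec = smul (cnj (deriv G (x k))) (mobius_deriv x (basis_vec k))"
    using grad_mobius_compose[OF hol_fun_coordinate[OF G] x] grad_coordinate[OF G x] lx
    by (simp add: mobius_deriv_smul)
  then have "l2norm (grad ((\<lambda>x. G (x k)) \<circ> mobius x) zerovec)
      = cmod (deriv G (x k)) * l2norm (mobius_deriv x (basis_vec k))"
    using lx by (simp add: l2norm_smul)
  also have "\<dots> \<le> (1 - (cmod (x k))\<^sup>2) * cmod (deriv G (x k))"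
    using mult_right_mono[OF l2norm_mobius_deriv_basis_vec[OF x, of k] norm_ge_zero[of "deriv G (x k)"]]
    by (simp add: mult.commute)
  finally show "ereal (l2norm (grad ((\<lambda>x. G (x k)) \<circ> mobius x) zerovec)) \<le> cbloch_semi G"
    using cbloch_semi_upper[of "x k" G] norm_less_1_if_BE[OF x] by (meson ereal_less_eq(3) order_trans mem_ball_0)
qed

lemma coordinate_in_bloch_space:
  assumes "F \<in> cbloch_space"
  shows "(\<lambda>x. F (x k)) \<in> bloch_space"
proof -
  have "F holomorphic_on ball 0 1" "cbloch_semi F < \<infinity>"
    using assms by (auto simp: cbloch_space_def)
  then show ?thesis
    using hol_fun_coordinate bloch_semi_coordinate_le[of F k]
    by (auto simp: bloch_space_def intro: le_less_trans)
qed

lemma bloch_norm_coordinate_le: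
  "G holomorphic_on ball 0 1 \<Longrightarrow> bloch_norm (\<lambda>x. G (x k)) \<le> cbloch_norm G"
  unfolding bloch_norm_def cbloch_norm_def
  using inv_norm_coordinate_le[of G k] by (simp add: zerovec_def add_left_mono)

lemma has_field_derivative_slice:
  assumes h: "hol_fun h" and t: "cmod t < 1"
  shows "((\<lambda>s. h (smul s (basis_vec l))) has_field_derivative cnj (grad h (smul t (basis_vec l)) l)) (at t)"
  using has_grad_slice_derivative[OF has_grad_grad[OF h smul_basis_vec_in_BE[OF t]]] by simp

lemma holomorphic_on_slice: "hol_fun h \<Longrightarrow> (\<lambda>s. h (smul s (basis_vec l))) holomorphic_on ball 0 1"
  unfolding holomorphic_on_open[OF open_ball] using has_field_derivative_slice by (metis mem_ball_0)

lemma slice_deriv_le: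
  assumes h: "hol_fun h" and t: "cmod t < 1"
  shows "(1 - (cmod t)\<^sup>2) * cmod (deriv (\<lambda>s. h (smul s (basis_vec l))) t)
       \<le> (1 - (l2norm (smul t (basis_vec l)))\<^sup>2) * l2norm (grad h (smul t (basis_vec l)))"
proof -
  have "deriv (\<lambda>s. h (smul s (basis_vec l))) t = cnj (grad h (smul t (basis_vec l)) l)"
    using has_field_derivative_slice[OF h t] by (rule DERIV_imp_deriv)
  moreover have "cmod (grad h (smul t (basis_vec l)) l) \<le> l2norm (grad h (smul t (basis_vec l)))"
    using is_l2_grad[OF h smul_basis_vec_in_BE[OF t]] by (rule norm_le_l2norm)
  ultimately show ?thesis
    using t by (simp add: l2norm_smul abs_square_less_1 mult_left_mono)
qed

lemma cbloch_semi_slice_le_bloch_semi: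
  "hol_fun h \<Longrightarrow> cbloch_semi (\<lambda>s. h (smul s (basis_vec l))) \<le> bloch_semi h"
  unfolding cbloch_semi_def bloch_semi_def
  by (rule SUP_least, rule SUP_upper2[OF smul_basis_vec_in_BE])
     (auto intro: slice_deriv_le)

lemma cbloch_semi_slice_le_inv_norm:
  assumes h: "hol_fun h"
  shows "cbloch_semi (\<lambda>s. h (smul s (basis_vec l))) \<le> inv_norm h"
  unfolding cbloch_semi_def
proof (rule SUP_least)
  fix t :: complex
  assume "t \<in> ball 0 1"
  then have t: "cmod t < 1"
    by simp
  show "ereal ((1 - (cmod t)\<^sup>2) * cmod (deriv (\<lambda>s. h (smul s (basis_vec l))) t)) \<le> inv_norm h"
    using slice_deriv_le[OF h t, of l] inv_norm_lower[OF h smul_basis_vec_in_BE[OF t]]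
    by (meson ereal_less_eq(3) order_trans)
qed

lemma slice_in_cbloch_space:
  assumes "h \<in> bloch_space"
  shows "(\<lambda>s. h (smul s (basis_vec l))) \<in> cbloch_space"
proof -
  have "hol_fun h" "bloch_semi h < \<infinity>"
    using assms by (auto simp: bloch_space_def)
  then show ?thesis
    using holomorphic_on_slice cbloch_semi_slice_le_bloch_semi[of h l]
    by (auto simp: cbloch_space_def intro: le_less_trans)
qed

lemma cbloch_norm_slice_le:
  "hol_fun h \<Longrightarrow> cbloch_norm (\<lambda>s. h (smul s (basis_vec l))) \<le> bloch_norm h"
  unfolding cbloch_norm_def bloch_norm_def
  using cbloch_semi_slice_le_inv_norm[of h l] by (simp add: smul_def zerovec_def add_left_mono)

section \<open>Compactness of the composition operator\<close>

lemma compact_comp_op_in_bloch_space: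
  "compact_comp_op \<phi> \<Longrightarrow> f \<in> bloch_space \<Longrightarrow> (\<lambda>x. f (\<phi> x)) \<in> bloch_space"
  unfolding compact_comp_op_def by (auto simp: comp_def)

text \<open>The limit of a Bloch-norm convergent subsequence of \<open>C\<^sub>\<phi> F\<^sub>j\<close> is also their pointwise limit,
  which vanishes; so along the subsequence \<open>C\<^sub>\<phi> F\<^sub>j\<close> itself tends to 0 in Bloch norm.\<close>

lemma compact_comp_op_grad_uniformly_small:
  fixes \<phi> :: "'g vec \<Rightarrow> 'g vec" and F :: "nat \<Rightarrow> 'g vec \<Rightarrow> complex"
  assumes cc: "compact_comp_op \<phi>"
    and F: "\<And>j. F j \<in> bloch_space" "\<And>j. bloch_norm (F j) \<le> ereal C"
    and pointwise: "\<And>x. x \<in> BE \<Longrightarrow> (\<lambda>j. F j (\<phi> x)) \<longlonglongrightarrow> 0"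
    and \<epsilon>: "\<epsilon> > 0"
  obtains j where "\<And>z. z \<in> BE \<Longrightarrow> (1 - (l2norm z)\<^sup>2) * l2norm (grad (\<lambda>x. F j (\<phi> x)) z) \<le> \<epsilon>"
proof -
  obtain r g where r: "strict_mono r" and g: "g \<in> bloch_space"
    and conv: "(\<lambda>n. bloch_norm (\<lambda>x. F (r n) (\<phi> x) - g x)) \<longlonglongrightarrow> 0"
    using cc F unfolding compact_comp_op_def by blast
  define H where "H n = (\<lambda>x. F (r n) (\<phi> x) - g x)" for n
  have hg: "hol_fun g"
    using g by (simp add: bloch_space_def)
  have hF: "hol_fun (\<lambda>x. F j (\<phi> x))" for j
    using compact_comp_op_in_bloch_space[OF cc F(1)] by (simp add: bloch_space_def)
  have hH: "hol_fun (H n)" for n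
    unfolding H_def using hF hg by (rule hol_fun_diff)
  have "g x = 0" if x: "x \<in> BE" for x
  proof -
    have "(\<lambda>n. F (r n) (\<phi> x) - H n x) \<longlonglongrightarrow> 0 - 0"
      using LIMSEQ_subseq_LIMSEQ[OF pointwise[OF x] r]
        bloch_norm_tendsto_zero_imp_tendsto[OF hH conv[folded H_def] x]
      by (intro tendsto_diff) (simp_all add: comp_def)
    then show ?thesis
      by (simp add: H_def LIMSEQ_const_iff)
  qed
  then have grad_H: "grad (H n) z = grad (\<lambda>x. F (r n) (\<phi> x)) z" if "z \<in> BE" for n z
    using grad_diff[OF hF hg that] grad_eq_zerovec_if_vanishing[of g, OF _ that]
    by (simp add: H_def vsub_def zerovec_def)
  obtain n where "bloch_norm (H n) < ereal \<epsilon>"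
    using order_tendstoD(2)[OF conv[folded H_def], of "ereal \<epsilon>"] \<epsilon>
    by (auto simp: eventually_sequentially zero_ereal_def)
  then have "inv_norm (H n) \<le> ereal \<epsilon>"
    using inv_norm_le_bloch_norm[of "H n"] by simp
  then show ?thesis
    using that[of "r n"] inv_norm_lower[OF hH] grad_H by (metis ereal_less_eq(3) order_trans)
qed

lemma compact_comp_op_coordinate_grad_uniformly_small:
  fixes \<phi> :: "'g vec \<Rightarrow> 'g vec" and kk :: "nat \<Rightarrow> 'g"
  assumes cc: "compact_comp_op \<phi>"
    and G: "\<And>j. G j holomorphic_on ball 0 1" "\<And>j. G j 0 = 0" "\<And>j. cbloch_semi (G j) \<le> 1"
    and pointwise: "\<And>x. x \<in> BE \<Longrightarrow> (\<lambda>j. G j (\<phi> x (kk j))) \<longlonglongrightarrow> 0"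
    and \<epsilon>: "\<epsilon> > 0"
  obtains j where
    "\<And>z. z \<in> BE \<Longrightarrow> (1 - (l2norm z)\<^sup>2) * l2norm (grad (\<lambda>x. G j (\<phi> x (kk j))) z) \<le> \<epsilon>"
proof (rule compact_comp_op_grad_uniformly_small[where F = "\<lambda>j x. G j (x (kk j))" and C = 1,
      OF cc _ _ pointwise \<epsilon>])
  show "(\<lambda>x. G j (x (kk j))) \<in> bloch_space" for j
  proof (rule coordinate_in_bloch_space)
    have "cbloch_semi (G j) < \<infinity>"
      using G(3)[of j] by (rule le_less_trans) simp
    then show "G j \<in> cbloch_space"
      using G(1) by (simp add: cbloch_space_def)
  qed
  show "bloch_norm (\<lambda>x. G j (x (kk j))) \<le> ereal 1" for j
    using bloch_norm_coordinate_le[OF G(1), of j "kk j"] G(2,3)[of j]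
    by (simp add: cbloch_norm_def one_ereal_def)
qed auto

section \<open>Peak functions on the disc\<close>

definition disc_peak :: "complex \<Rightarrow> complex \<Rightarrow> complex" where
  "disc_peak w t = complex_of_real (1 - (cmod w)\<^sup>2) * t / (1 - cnj w * t)"

lemma norm_one_minus_cnj_mult_power2:
  "(cmod (1 - cnj w * t))\<^sup>2 = (cmod (w - t))\<^sup>2 + (1 - (cmod w)\<^sup>2) * (1 - (cmod t)\<^sup>2)"
  by (simp add: cmod_power2) algebra

lemma norm_one_minus_cnj_mult_ge:
  assumes "cmod w < 1"
  shows "cmod (1 - cnj w * t) \<ge> 1 - cmod t"
proof -
  have "cmod (cnj w * t) \<le> cmod t"
    using assms by (simp add: norm_mult mult_left_le_one_le)
  then show ?thesis
    using norm_triangle_ineq2[of 1 "cnj w * t"] by simp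
qed

lemma norm_of_real_one_minus_norm_power2: "cmod w < 1 \<Longrightarrow> cmod (complex_of_real (1 - (cmod w)\<^sup>2)) = 1 - (cmod w)\<^sup>2"
  by (subst norm_of_real) (use abs_square_less_1[of "cmod w"] in simp)

lemma norm_one_minus_cnj_mult_pos: "cmod w < 1 \<Longrightarrow> cmod t < 1 \<Longrightarrow> cmod (1 - cnj w * t) > 0"
  using norm_one_minus_cnj_mult_ge[of w t] by linarith

lemma has_field_derivative_disc_peak:
  assumes w: "cmod w < 1" and t: "cmod t < 1"
  shows "(disc_peak w has_field_derivative complex_of_real (1 - (cmod w)\<^sup>2) / (1 - cnj w * t)\<^sup>2) (at t)"
proof -
  have nz: "1 - cnj w * t \<noteq> 0"
    using norm_one_minus_cnj_mult_pos[OF w t] by auto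
  show ?thesis
    unfolding disc_peak_def
    by (rule derivative_eq_intros refl | use nz in \<open>simp add: power2_eq_square algebra_simps\<close>)+
qed

lemma deriv_disc_peak:
  "cmod w < 1 \<Longrightarrow> cmod t < 1 \<Longrightarrow>
   deriv (disc_peak w) t = complex_of_real (1 - (cmod w)\<^sup>2) / (1 - cnj w * t)\<^sup>2"
  using has_field_derivative_disc_peak by (rule DERIV_imp_deriv)

lemma holomorphic_on_disc_peak: "cmod w < 1 \<Longrightarrow> disc_peak w holomorphic_on ball 0 1"
  unfolding holomorphic_on_open[OF open_ball] by (metis has_field_derivative_disc_peak mem_ball_0)

lemma disc_peak_0 [simp]: "disc_peak w 0 = 0"
  by (simp add: disc_peak_def)

lemma cbloch_semi_disc_peak_le:
  assumes w: "cmod w < 1"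
  shows "cbloch_semi (disc_peak w) \<le> 1"
  unfolding cbloch_semi_def
proof (rule SUP_least)
  fix t :: complex
  assume "t \<in> ball 0 1"
  then have t: "cmod t < 1"
    by simp
  have P: "(cmod (1 - cnj w * t))\<^sup>2 > 0"
    using norm_one_minus_cnj_mult_pos[OF w t] by simp
  have "cmod (deriv (disc_peak w) t) = (1 - (cmod w)\<^sup>2) / (cmod (1 - cnj w * t))\<^sup>2"
    by (simp only: deriv_disc_peak[OF w t] norm_divide norm_power norm_of_real_one_minus_norm_power2[OF w])
  then have "(1 - (cmod t)\<^sup>2) * cmod (deriv (disc_peak w) t)
      = ((1 - (cmod t)\<^sup>2) * (1 - (cmod w)\<^sup>2)) / (cmod (1 - cnj w * t))\<^sup>2"
    by simp
  also have "\<dots> \<le> 1"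
    using norm_one_minus_cnj_mult_power2[of w t] P by (simp add: mult.commute)
  finally show "ereal ((1 - (cmod t)\<^sup>2) * cmod (deriv (disc_peak w) t)) \<le> 1"
    by simp
qed

lemma norm_deriv_disc_peak_at_peak:
  assumes w: "cmod w < 1"
  shows "cmod (deriv (disc_peak w) w) = 1 / (1 - (cmod w)\<^sup>2)"
proof -
  have "1 - cnj w * w = complex_of_real (1 - (cmod w)\<^sup>2)"
    using complex_norm_square[of w] by (simp add: mult.commute del: of_real_power)
  then have "cmod (deriv (disc_peak w) w)
      = cmod (complex_of_real (1 - (cmod w)\<^sup>2)) / (cmod (complex_of_real (1 - (cmod w)\<^sup>2)))\<^sup>2"
    by (simp only: deriv_disc_peak[OF w w] norm_divide norm_power)
  also have "\<dots> = 1 / (1 - (cmod w)\<^sup>2)"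
    using w by (simp only: norm_of_real_one_minus_norm_power2) (simp add: power2_eq_square abs_square_less_1)
  finally show ?thesis .
qed

lemma norm_disc_peak_le:
  assumes w: "cmod w < 1" and s: "cmod s < 1"
  shows "cmod (disc_peak w s) \<le> (1 - (cmod w)\<^sup>2) * cmod s / (1 - cmod s)"
proof -
  have d: "1 - cmod s \<le> cmod (1 - cnj w * s)"
    using norm_one_minus_cnj_mult_ge[OF w] .
  have "cmod (disc_peak w s) = (1 - (cmod w)\<^sup>2) * cmod s / cmod (1 - cnj w * s)"
    by (simp only: disc_peak_def norm_divide norm_mult norm_of_real_one_minus_norm_power2[OF w])
  also have "\<dots> \<le> (1 - (cmod w)\<^sup>2) * cmod s / (1 - cmod s)"
    using d s norm_one_minus_cnj_mult_pos[OF w s] abs_square_less_1[of "cmod w"] w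
    by (intro divide_left_mono mult_pos_pos mult_nonneg_nonneg) auto
  finally show ?thesis .
qed

lemma disc_peak_tendsto_zero:
  assumes w: "\<And>j. cmod (w j) < 1" and s: "\<And>j. cmod (s j) < 1" and lim: "s \<longlonglongrightarrow> 0"
  shows "(\<lambda>j. disc_peak (w j) (s j)) \<longlonglongrightarrow> 0"
proof (rule Lim_null_comparison)
  have "(\<lambda>j. cmod (s j) / (1 - cmod (s j))) \<longlonglongrightarrow> 0 / (1 - 0)"
    using tendsto_norm_zero[OF lim] by (intro tendsto_divide tendsto_diff tendsto_const) auto
  then show "(\<lambda>j. cmod (s j) / (1 - cmod (s j))) \<longlonglongrightarrow> 0"
    by simp
  have "cmod (disc_peak (w j) (s j)) \<le> cmod (s j) / (1 - cmod (s j))" for j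
  proof -
    have "cmod (disc_peak (w j) (s j)) \<le> (1 - (cmod (w j))\<^sup>2) * cmod (s j) / (1 - cmod (s j))"
      by (rule norm_disc_peak_le[OF w s])
    also have "\<dots> \<le> cmod (s j) / (1 - cmod (s j))"
      using s[of j] w[of j] by (intro divide_right_mono mult_left_le_one_le) (auto simp: abs_square_le_1)
    finally show ?thesis .
  qed
  then show "\<forall>\<^sub>F j in sequentially. norm (disc_peak (w j) (s j)) \<le> cmod (s j) / (1 - cmod (s j))"
    by simp
qed

lemma disc_peak_tendsto_zero_at_boundary:
  assumes w: "\<And>j. cmod (w j) < 1" and lim: "(\<lambda>j. cmod (w j)) \<longlonglongrightarrow> 1" and s: "cmod s < 1"
  shows "(\<lambda>j. disc_peak (w j) s) \<longlonglongrightarrow> 0"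
proof (rule Lim_null_comparison)
  have "(\<lambda>j. (1 - (cmod (w j))\<^sup>2) * cmod s / (1 - cmod s)) \<longlonglongrightarrow> (1 - 1\<^sup>2) * cmod s / (1 - cmod s)"
    using s by (intro tendsto_intros lim) auto
  then show "(\<lambda>j. (1 - (cmod (w j))\<^sup>2) * cmod s / (1 - cmod s)) \<longlonglongrightarrow> 0"
    by simp
  show "\<forall>\<^sub>F j in sequentially. norm (disc_peak (w j) s) \<le> (1 - (cmod (w j))\<^sup>2) * cmod s / (1 - cmod s)"
    using norm_disc_peak_le[OF w s] by simp
qed

section \<open>Coordinates of a compact composition operator\<close>

lemma compact_ccomp_op_slice:
  fixes \<phi> :: "'g vec \<Rightarrow> 'g vec"
  assumes cc: "compact_comp_op \<phi>"
  shows "compact_ccomp_op (\<lambda>t. \<phi> (smul t (basis_vec l)) k)"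
  unfolding compact_ccomp_op_def
proof (intro conjI ballI allI impI)
  let ?\<psi> = "\<lambda>t. \<phi> (smul t (basis_vec l)) k"
  fix F
  assume "F \<in> cbloch_space"
  then have "(\<lambda>x. F (\<phi> x k)) \<in> bloch_space"
    by (intro compact_comp_op_in_bloch_space[OF cc] coordinate_in_bloch_space)
  from slice_in_cbloch_space[OF this, of l] show "F \<circ> ?\<psi> \<in> cbloch_space"
    by (simp add: comp_def)
next
  let ?\<psi> = "\<lambda>t. \<phi> (smul t (basis_vec l)) k"
  fix Fs :: "nat \<Rightarrow> complex \<Rightarrow> complex"
  assume Fs: "\<forall>n. Fs n \<in> cbloch_space" and "\<exists>C. \<forall>n. cbloch_norm (Fs n) \<le> ereal C"
  then obtain C where C: "\<And>n. cbloch_norm (Fs n) \<le> ereal C"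
    by blast
  define f where "f n = (\<lambda>x :: 'g vec. Fs n (x k))" for n
  have f: "f n \<in> bloch_space" for n
    using Fs by (simp add: f_def coordinate_in_bloch_space)
  have "bloch_norm (f n) \<le> ereal C" for n
    using bloch_norm_coordinate_le[of "Fs n" k] Fs C[of n] by (auto simp: f_def cbloch_space_def)
  then obtain r g where r: "strict_mono r" and g: "g \<in> bloch_space"
    and conv: "(\<lambda>n. bloch_norm (\<lambda>x. f (r n) (\<phi> x) - g x)) \<longlonglongrightarrow> 0"
    using cc f unfolding compact_comp_op_def by blast
  define G where "G = (\<lambda>s. g (smul s (basis_vec l)))"
  have hol: "hol_fun (\<lambda>x. f (r n) (\<phi> x) - g x)" for n
    using compact_comp_op_in_bloch_space[OF cc f] g by (intro hol_fun_diff) (auto simp: bloch_space_def)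
  have "cbloch_norm (\<lambda>z. Fs (r n) (?\<psi> z) - G z) \<le> bloch_norm (\<lambda>x. f (r n) (\<phi> x) - g x)" for n
    using cbloch_norm_slice_le[OF hol, of n l] by (simp add: f_def G_def)
  then have "(\<lambda>n. cbloch_norm (\<lambda>z. Fs (r n) (?\<psi> z) - G z)) \<longlonglongrightarrow> 0"
    by (intro tendsto_sandwich[OF _ _ tendsto_const conv]) (auto simp: cbloch_norm_nonneg)
  moreover have "G \<in> cbloch_space"
    unfolding G_def using g by (rule slice_in_cbloch_space)
  ultimately show "\<exists>r G. strict_mono r \<and> G \<in> cbloch_space \<and>
      (\<lambda>n. cbloch_norm (\<lambda>z. Fs (r n) (?\<psi> z) - G z)) \<longlonglongrightarrow> 0"
    using r by blast
qed

lemma quot_nonneg: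
  assumes hs: "hol_selfmap \<phi>" and z: "z \<in> BE"
  shows "quot \<phi> k z \<ge> 0"
proof -
  have "(cmod (\<phi> z k))\<^sup>2 < 1"
    using norm_less_1_if_BE[OF hol_selfmap_in_BE[OF hs z], of k] by (simp add: abs_square_less_1)
  then show ?thesis
    using l2norm_power2_less_1[OF z] unfolding quot_def
    by (intro divide_nonneg_pos mult_nonneg_nonneg) auto
qed

text \<open>The chain rule and \<open>|G\<^sub>w'(w)| = 1 / (1 - |w|\<^sup>2)\<close> turn the quotient at \<open>z\<close> into the radial
  part of the invariant gradient of \<open>disc_peak (\<phi>\<^sub>k z) \<circ> \<phi>\<^sub>k\<close> at \<open>z\<close>.\<close>

lemma quot_le_disc_peak_grad:
  fixes \<phi> :: "'g vec \<Rightarrow> 'g vec"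
  assumes hs: "hol_selfmap \<phi>" and z: "z \<in> BE"
  shows "quot \<phi> k z \<le> (1 - (l2norm z)\<^sup>2) * l2norm (grad (\<lambda>x. disc_peak (\<phi> z k) (\<phi> x k)) z)"
proof -
  define w where "w = \<phi> z k"
  define p where "p = (\<lambda>x. \<phi> x k)"
  have hp: "hol_fun p"
    unfolding p_def by (rule hol_fun_hol_selfmap_component[OF hs])
  have w: "cmod w < 1"
    unfolding w_def using hol_selfmap_in_BE[OF hs z] by (rule norm_less_1_if_BE)
  define D where "D = deriv (disc_peak w) w"
  have "(disc_peak w has_field_derivative D) (at (p z))"
    using has_field_derivative_disc_peak[OF w w] by (simp add: D_def p_def w_def DERIV_imp_deriv)
  then have gr: "grad (\<lambda>x. disc_peak w (p x)) z = smul (cnj D) (grad p z)"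
    by (intro grad_eqI has_grad_compose has_grad_grad[OF hp z])
  have lg: "is_l2 (grad p z)"
    by (rule is_l2_grad[OF hp z])
  have "quot \<phi> k z = (1 - (l2norm z)\<^sup>2) * (cmod D * cmod (radial p z))"
    using norm_deriv_disc_peak_at_peak[OF w] by (simp add: quot_def p_def w_def D_def)
  also have "cmod D * cmod (radial p z) = cmod (l2inner z (grad (\<lambda>x. disc_peak w (p x)) z))"
    unfolding gr radial_def using lg z by (simp add: BE_iff l2inner_smul_right norm_mult)
  also have "(1 - (l2norm z)\<^sup>2) * \<dots> \<le> (1 - (l2norm z)\<^sup>2) * l2norm (grad (\<lambda>x. disc_peak w (p x)) z)"
    using norm_l2inner_le_if_BE[OF z] lg l2norm_power2_less_1[OF z]
    by (intro mult_left_mono) (auto simp: gr)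
  finally show ?thesis
    by (simp add: w_def p_def)
qed

lemma quot_small_at_some_index:
  fixes \<phi> :: "'g vec \<Rightarrow> 'g vec" and kk :: "nat \<Rightarrow> 'g"
  assumes hs: "hol_selfmap \<phi>" and cc: "compact_comp_op \<phi>" and zz: "\<And>j. zz j \<in> BE"
    and pointwise: "\<And>x. x \<in> BE \<Longrightarrow> (\<lambda>j. disc_peak (\<phi> (zz j) (kk j)) (\<phi> x (kk j))) \<longlonglongrightarrow> 0"
    and \<epsilon>: "\<epsilon> > 0"
  obtains j where "quot \<phi> (kk j) (zz j) \<le> \<epsilon>"
proof -
  have w: "cmod (\<phi> (zz j) (kk j)) < 1" for j
    using hol_selfmap_in_BE[OF hs zz] by (rule norm_less_1_if_BE)
  obtain j where j: "\<And>z. z \<in> BE \<Longrightarrow> (1 - (l2norm z)\<^sup>2)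
      * l2norm (grad (\<lambda>x. disc_peak (\<phi> (zz j) (kk j)) (\<phi> x (kk j))) z) \<le> \<epsilon>"
    using compact_comp_op_coordinate_grad_uniformly_small[OF cc holomorphic_on_disc_peak[OF w]
        disc_peak_0 cbloch_semi_disc_peak_le[OF w] pointwise \<epsilon>]
    by blast
  show ?thesis
    using that[of j] order_trans[OF quot_le_disc_peak_grad[OF hs zz] j[OF zz]] by blast
qed

lemma finite_quot_sup_ge:
  fixes \<phi> :: "'g vec \<Rightarrow> 'g vec"
  assumes hs: "hol_selfmap \<phi>" and cc: "compact_comp_op \<phi>" and \<epsilon>: "\<epsilon> > 0"
  shows "finite {k. (SUP z\<in>BE. ereal (quot \<phi> k z)) \<ge> ereal \<epsilon>}"
proof (rule ccontr)
  assume "infinite {k. (SUP z\<in>BE. ereal (quot \<phi> k z)) \<ge> ereal \<epsilon>}"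
  then obtain kk :: "nat \<Rightarrow> 'g" where kk: "inj kk"
    and "range kk \<subseteq> {k. (SUP z\<in>BE. ereal (quot \<phi> k z)) \<ge> ereal \<epsilon>}"
    using infinite_countable_subset by blast
  then have big: "(SUP z\<in>BE. ereal (quot \<phi> (kk j) z)) \<ge> ereal \<epsilon>" for j
    by blast
  have "\<exists>z\<in>BE. quot \<phi> (kk j) z > \<epsilon>/2" for j
  proof -
    have "ereal (\<epsilon>/2) < (SUP z\<in>BE. ereal (quot \<phi> (kk j) z))"
      by (rule order_less_le_trans[OF _ big[of j]]) (use \<epsilon> in simp)
    then show ?thesis
      by (simp add: less_SUP_iff)
  qed
  then obtain zz where zz: "\<And>j. zz j \<in> BE" "\<And>j. quot \<phi> (kk j) (zz j) > \<epsilon>/2"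
    by metis
  have "(\<lambda>j. disc_peak (\<phi> (zz j) (kk j)) (\<phi> x (kk j))) \<longlonglongrightarrow> 0" if x: "x \<in> BE" for x
  proof (rule disc_peak_tendsto_zero)
    show "cmod (\<phi> (zz j) (kk j)) < 1" for j
      using hol_selfmap_in_BE[OF hs zz(1)] by (rule norm_less_1_if_BE)
    show "cmod (\<phi> x (kk j)) < 1" for j
      using hol_selfmap_in_BE[OF hs x] by (rule norm_less_1_if_BE)
    show "(\<lambda>j. \<phi> x (kk j)) \<longlonglongrightarrow> 0"
      using l2_tendsto_zero_along_inj[OF kk] hol_selfmap_in_BE[OF hs x] by (simp add: BE_iff)
  qed
  moreover have "\<epsilon>/2 > 0"
    using \<epsilon> by simp
  ultimately obtain j where "quot \<phi> (kk j) (zz j) \<le> \<epsilon>/2"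
    using quot_small_at_some_index[where zz = zz and kk = kk, OF hs cc zz(1)] by blast
  then show False
    using zz(2)[of j] by simp
qed

lemma finite_bloch_semi_component_ge:
  fixes \<phi> :: "'g vec \<Rightarrow> 'g vec"
  assumes hs: "hol_selfmap \<phi>" and cc: "compact_comp_op \<phi>" and \<epsilon>: "\<epsilon> > 0"
  shows "finite {k. bloch_semi (\<lambda>x. \<phi> x k) \<ge> ereal \<epsilon>}"
proof (rule ccontr)
  assume "infinite {k. bloch_semi (\<lambda>x. \<phi> x k) \<ge> ereal \<epsilon>}"
  then obtain kk :: "nat \<Rightarrow> 'g" where kk: "inj kk"
    and "range kk \<subseteq> {k. bloch_semi (\<lambda>x. \<phi> x k) \<ge> ereal \<epsilon>}"
    using infinite_countable_subset by blast
  then have big: "bloch_semi (\<lambda>x. \<phi> x (kk j)) \<ge> ereal \<epsilon>" for j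
    by blast
  have id: "(\<lambda>t::complex. t) holomorphic_on ball 0 1" "(\<lambda>t::complex. t) 0 = 0"
    "cbloch_semi (\<lambda>t::complex. t) \<le> 1"
    unfolding cbloch_semi_def by (auto intro: SUP_least)
  have "(\<lambda>j. \<phi> x (kk j)) \<longlonglongrightarrow> 0" if "x \<in> BE" for x
    using l2_tendsto_zero_along_inj[OF kk] hol_selfmap_in_BE[OF hs that] by (simp add: BE_iff)
  moreover have "\<epsilon>/2 > 0"
    using \<epsilon> by simp
  ultimately obtain j where
    "\<And>z. z \<in> BE \<Longrightarrow> (1 - (l2norm z)\<^sup>2) * l2norm (grad (\<lambda>x. \<phi> x (kk j)) z) \<le> \<epsilon>/2"
    using compact_comp_op_coordinate_grad_uniformly_small[where G = "\<lambda>_ t. t" and kk = kk, OF cc id]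
    by blast
  then have "bloch_semi (\<lambda>x. \<phi> x (kk j)) \<le> ereal (\<epsilon>/2)"
    unfolding bloch_semi_def by (intro SUP_least) simp
  then have "ereal \<epsilon> \<le> ereal (\<epsilon>/2)"
    using big[of j] by (rule order_trans[rotated])
  then show False
    using \<epsilon> by simp
qed

lemma quot_small_near_boundary:
  fixes \<phi> :: "'g vec \<Rightarrow> 'g vec"
  assumes hs: "hol_selfmap \<phi>" and cc: "compact_comp_op \<phi>" and \<epsilon>: "\<epsilon> > 0"
  shows "\<exists>r<1. \<forall>z\<in>BE. cmod (\<phi> z n) > r \<longrightarrow> \<bar>quot \<phi> n z\<bar> < \<epsilon>"
proof (rule ccontr)
  assume contra: "\<not> (\<exists>r<1. \<forall>z\<in>BE. cmod (\<phi> z n) > r \<longrightarrow> \<bar>quot \<phi> n z\<bar> < \<epsilon>)"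
  have "\<exists>z\<in>BE. cmod (\<phi> z n) > 1 - inverse (real (Suc j)) \<and> \<bar>quot \<phi> n z\<bar> \<ge> \<epsilon>" for j
  proof -
    have "1 - inverse (real (Suc j)) < 1"
      by simp
    then show ?thesis
      using contra by (meson not_less)
  qed
  then obtain zz where zz: "\<And>j. zz j \<in> BE"
    "\<And>j. cmod (\<phi> (zz j) n) > 1 - inverse (real (Suc j))" "\<And>j. \<bar>quot \<phi> n (zz j)\<bar> \<ge> \<epsilon>"
    by metis
  have w: "cmod (\<phi> (zz j) n) < 1" for j
    using hol_selfmap_in_BE[OF hs zz(1)] by (rule norm_less_1_if_BE)
  have lower: "(\<lambda>j. 1 - inverse (real (Suc j))) \<longlonglongrightarrow> 1"
    using tendsto_diff[OF tendsto_const LIMSEQ_inverse_real_of_nat, of 1] by simp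
  have "(\<lambda>j. cmod (\<phi> (zz j) n)) \<longlonglongrightarrow> 1"
  proof (rule tendsto_sandwich[OF _ _ lower tendsto_const])
    show "\<forall>\<^sub>F j in sequentially. 1 - inverse (real (Suc j)) \<le> cmod (\<phi> (zz j) n)"
      using zz(2) by (simp add: less_imp_le)
    show "\<forall>\<^sub>F j in sequentially. cmod (\<phi> (zz j) n) \<le> 1"
      using w by (simp add: less_imp_le)
  qed
  then have pointwise: "(\<lambda>j. disc_peak (\<phi> (zz j) n) (\<phi> x n)) \<longlonglongrightarrow> 0" if "x \<in> BE" for x
    using hol_selfmap_in_BE[OF hs that]
    by (rule disc_peak_tendsto_zero_at_boundary[OF w _ norm_less_1_if_BE])
  have "\<epsilon>/2 > 0"
    using \<epsilon> by simp
  then obtain j where "quot \<phi> n (zz j) \<le> \<epsilon>/2"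
    using quot_small_at_some_index[where zz = zz and kk = "\<lambda>_. n", OF hs cc zz(1) pointwise]
    by blast
  then show False
    using zz(3)[of j] quot_nonneg[OF hs zz(1)] \<epsilon> by simp
qed

theorem proposition4p9:
  fixes \<phi> :: "'g vec \<Rightarrow> 'g vec"
  assumes "hol_selfmap \<phi>"
    and "compact_comp_op \<phi>"
  shows "(\<forall>k l. compact_ccomp_op (\<lambda>t. \<phi> (smul t (basis_vec l)) k))
       \<and> (\<forall>\<epsilon>>0. finite {k. (SUP z\<in>BE. ereal (quot \<phi> k z)) \<ge> ereal \<epsilon>})
       \<and> (\<forall>\<epsilon>>0. finite {k. bloch_semi (\<lambda>x. \<phi> x k) \<ge> ereal \<epsilon>})
       \<and> (\<forall>n. \<forall>\<epsilon>>0. \<exists>r<1. \<forall>z\<in>BE. cmod (\<phi> z n) > r \<longrightarrow> \<bar>quot \<phi> n z\<bar> < \<epsilon>)"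
  using compact_ccomp_op_slice[OF assms(2)] finite_quot_sup_ge[OF assms]
    finite_bloch_semi_component_ge[OF assms] quot_small_near_boundary[OF assms]
  by blast

end
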